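(* Let $0<s<\tfrac12$ and set $$\gamma(s)=\gamma_1(s)\gamma_2(s),\qquad \gamma_1(s)=\frac{1}{2}\left(\frac{2^{1-2s}-1}{1-2^{-2s}}\right),\qquad \gamma_2(s)=\frac{2-2^{-2s}}{1-2^{-2s}}.$$ Then for every $\varphi\in\mathcal{S}(\mathcal{H})$, $$\mathcal{Q}^\delta_s(\varphi)\cdot\mathcal{E}^\delta_s(\varphi)\geq\gamma(s)\,\|\varphi\|_{L^2(\mathbb{R}^+)}^4 .$$
   Context: Let $\mathbb{R}^+=(0,\infty)$. Dyadic intervals. $\mathcal{D}$ is the family of dyadic intervals in $\mathbb{R}^+$, namely the intervals $I^j_k=(k2^{-j},(k+1)2^{-j}]$ with $j\in\mathbb{Z}$ and $k$ a nonnegative integer. Dyadic distance. For $x,y\in\mathbb{R}^+$ set $\delta(x,y)=\inf\{|I|: I\in\mathcal{D},\ x,y\in I\}$. This is a metric on $\mathbb{R}^+$. Haar system. Let $h=\chi_{(0,1/2]}-\chi_{(1/2,1]}$. The Haar system $\mathcal{H}$ consists of the functions $h_I(x)=2^{j/2}h(2^jx-k)$, one for each $I=I^j_k\in\mathcal{D}$. For $h=h_I$ write $I(h)=I$. The system $\mathcal{H}$ is an orthonormal basis of $L^2(\mathbb{R}^+)$. $\mathcal{S}(\mathcal{H})$ denotes the set of finite linear combinations (complex coefficients) of elements of $\mathcal{H}$. Quadratic forms, for functions on $\mathbb{R}^+$: $$\mathcal{E}^\delta_s(\varphi)=\iint_{(\mathbb{R}^+)^2}\frac{|\varphi(x)-\varphi(y)|^2}{\delta(x,y)^{2s}}\,\frac{dx\,dy}{\delta(x,y)},$$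 $$\mathcal{Q}^\delta_s(\varphi)=\iint_{(\mathbb{R}^+)^2}\delta(x,y)^{2s}\varphi(x)\overline{\varphi(y)}\,\frac{dx\,dy}{\delta(x,y)}.$$ *)

theory Defs
  imports "HOL-Analysis.Analysis" "HOL-Library.Complex_Order"
begin

definition dyadic_interval :: "int \<Rightarrow> nat \<Rightarrow> real set" where
  "dyadic_interval j k = {real k * 2 powr (- real_of_int j) <.. (real k + 1) * 2 powr (- real_of_int j)}"

definition dyadic_family :: "real set set" where
  "dyadic_family = {dyadic_interval j k | j k. True}"

definition dyadic_dist :: "real \<Rightarrow> real \<Rightarrow> real" where
  "dyadic_dist x y = Inf {measure lborel I | I. I \<in> dyadic_family \<and> x \<in> I \<and> y \<in> I}"

definition haar_mother :: "real \<Rightarrow> real" where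
  "haar_mother x = indicator {0<..1/2} x - indicator {1/2<..1} x"

definition haar :: "int \<Rightarrow> nat \<Rightarrow> real \<Rightarrow> real" where
  "haar j k x = 2 powr (real_of_int j / 2) * haar_mother (2 powr (real_of_int j) * x - real k)"

definition haar_span :: "(real \<Rightarrow> complex) set" where
  "haar_span = {\<phi>. \<exists>F c. finite (F :: (int \<times> nat) set) \<and>
       \<phi> = (\<lambda>x. \<Sum>(j,k)\<in>F. c (j,k) * complex_of_real (haar j k x))}"

definition posquad :: "(real \<times> real) set" where
  "posquad = {0<..} \<times> {0<..}"

definition energy_E :: "real \<Rightarrow> (real \<Rightarrow> complex) \<Rightarrow> real" where
  "energy_E s \<phi> = (LINT p : posquad | (lborel \<Otimes>\<^sub>M lborel).
      (cmod (\<phi> (fst p) - \<phi> (snd p)))\<^sup>2 / dyadic_dist (fst p) (snd p) powr (2 * s)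
        / dyadic_dist (fst p) (snd p))"

definition form_Q :: "real \<Rightarrow> (real \<Rightarrow> complex) \<Rightarrow> complex" where
  "form_Q s \<phi> = (LINT p : posquad | (lborel \<Otimes>\<^sub>M lborel).
      complex_of_real (dyadic_dist (fst p) (snd p) powr (2 * s)) * \<phi> (fst p) * cnj (\<phi> (snd p))
        / complex_of_real (dyadic_dist (fst p) (snd p)))"

definition L2_norm_pos :: "(real \<Rightarrow> complex) \<Rightarrow> real" where
  "L2_norm_pos \<phi> = sqrt (LINT x : {0<..} | lborel. (cmod (\<phi> x))\<^sup>2)"

definition dgamma1 :: "real \<Rightarrow> real" where
  "dgamma1 s = (1/2) * ((2 powr (1 - 2 * s) - 1) / (1 - 2 powr (- (2 * s))))"

definition dgamma2 :: "real \<Rightarrow> real" where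
  "dgamma2 s = (2 - 2 powr (- (2 * s))) / (1 - 2 powr (- (2 * s)))"

definition dgamma :: "real \<Rightarrow> real" where
  "dgamma s = dgamma1 s * dgamma2 s"

end

theory Submission
  imports Defs
begin

text \<open>
  For \<open>x \<noteq> y\<close> the dyadic distance is \<open>2^L\<close>, where \<open>L\<close> is the least scale at which \<open>x\<close> and
  \<open>y\<close> lie in a common dyadic cell; so for \<open>p < 0\<close> the kernel \<open>\<delta>^p\<close> telescopes into the sum over
  all scales \<open>m\<close> of \<open>(1 - 2^p) 2^(pm)\<close> times the indicator that \<open>x\<close> and \<open>y\<close> share a scale-\<open>m\<close> cell.
  Both forms thereby become series over scales in \<open>u(m) = 2^(-m) \<Sum>k |\<integral>\<^bsub>cell k\<^esub> \<phi>|^2\<close>, the squared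
  norm of the scale-\<open>m\<close> cell averages of \<open>\<phi>\<close>:
  \<open>Q(\<phi>) = \<Sum>m (1 - 2^(2s-1)) 2^(2sm) u(m)\<close> and \<open>E(\<phi>) = \<Sum>m 2 (1 - 2^(-2s-1)) 2^(-2sm) (||\<phi>||^2 - u(m))\<close>.

  For a finite Haar sum, \<open>u\<close> decreases as the cells get coarser, equals \<open>||\<phi>||^2\<close> at fine scales
  (where \<open>\<phi>\<close> is constant on cells) and vanishes at coarse ones (where \<open>\<phi>\<close> has mean zero on cells).
  Hence \<open>u(m) = \<Sum>i e\<^sub>i [m \<le> m1 + i]\<close> with \<open>e\<^sub>i \<ge> 0\<close> and \<open>\<Sum>i e\<^sub>i = ||\<phi>||^2\<close>, which turns the two series
  into \<open>\<Sum>i e\<^sub>i A\<^sub>i\<close> and \<open>\<Sum>i e\<^sub>i B\<^sub>i\<close> with \<open>A\<^sub>i B\<^sub>i = \<gamma>(s)\<close> for every \<open>i\<close>. Cauchy-Schwarz concludes.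
\<close>

definition dyadic_index :: "int \<Rightarrow> real \<Rightarrow> int" where
  "dyadic_index m x = \<lceil>x / 2 powr m\<rceil>"

definition same_cell :: "int \<Rightarrow> real \<Rightarrow> real \<Rightarrow> bool" where
  "same_cell m x y \<longleftrightarrow> dyadic_index m x = dyadic_index m y"

text \<open>Cells are indexed by the scale \<open>m = -j\<close> of the paper: \<open>dyadic_cell m k\<close> is \<open>I^(-m)_k\<close>,
  of length \<open>2^m\<close>, and the cell of scale \<open>m\<close> containing \<open>x > 0\<close> has index
  \<open>dyadic_index m x - 1\<close>.\<close>
definition dyadic_cell :: "int \<Rightarrow> nat \<Rightarrow> real set" where
  "dyadic_cell m k = {real k * 2 powr m <.. (real k + 1) * 2 powr m}"

lemma dyadic_interval_eq_cell: "dyadic_interval j k = dyadic_cell (- j) k"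
  unfolding dyadic_interval_def dyadic_cell_def by simp

lemma mem_dyadic_cell_iff: "x \<in> dyadic_cell m k \<longleftrightarrow> dyadic_index m x = int k + 1"
proof -
  have "x \<in> dyadic_cell m k \<longleftrightarrow> real k < x / 2 powr m \<and> x / 2 powr m \<le> real k + 1"
    unfolding dyadic_cell_def by (simp add: field_simps)
  also have "\<dots> \<longleftrightarrow> dyadic_index m x = int k + 1"
    unfolding dyadic_index_def by (subst ceiling_eq_iff) auto
  finally show ?thesis .
qed

lemma dyadic_index_pos: "0 < x \<Longrightarrow> 1 \<le> dyadic_index m x"
  unfolding dyadic_index_def by (simp add: less_ceiling_iff[symmetric])

lemma dyadic_cell_pos: "x \<in> dyadic_cell m k \<Longrightarrow> 0 < x"
  unfolding dyadic_cell_def by (auto intro: le_less_trans[rotated])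

lemma dyadic_index_eq_1: "0 < x \<Longrightarrow> x \<le> 2 powr m \<Longrightarrow> dyadic_index m x = 1"
  unfolding dyadic_index_def by (subst ceiling_eq_iff) (simp add: field_simps)

lemma ceiling_half_ceiling: "\<lceil>real_of_int \<lceil>t\<rceil> / 2\<rceil> = \<lceil>t / 2\<rceil>" for t :: real
proof -
  have "\<lceil>t / 2\<rceil> = - (\<lfloor>- t\<rfloor> div 2)"
    using floor_divide_real_eq_div[of 2 "- t"] by (simp add: ceiling_def)
  moreover have "\<lceil>real_of_int \<lceil>t\<rceil> / 2\<rceil> = - (\<lfloor>- t\<rfloor> div 2)"
    using floor_divide_of_int_eq[of "\<lfloor>- t\<rfloor>" 2] by (simp add: ceiling_def)
  ultimately show ?thesis by simp
qed

lemma dyadic_index_succ: "dyadic_index (m + 1) x = \<lceil>real_of_int (dyadic_index m x) / 2\<rceil>"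
proof -
  have "2 powr real_of_int (m + 1) = 2 powr m * 2"
    by (simp add: powr_add)
  then have "x / 2 powr real_of_int (m + 1) = (x / 2 powr m) / 2"
    by (simp only: divide_divide_eq_left)
  then show ?thesis unfolding dyadic_index_def by (simp only: ceiling_half_ceiling)
qed

lemma same_cell_mono:
  assumes "same_cell m x y" "m \<le> m'"
  shows "same_cell m' x y"
  using assms(2)
  by (induction rule: int_ge_induct) (use assms(1) in \<open>auto simp: same_cell_def dyadic_index_succ\<close>)

lemma same_cell_if_le_powr:
  "0 < x \<Longrightarrow> 0 < y \<Longrightarrow> x \<le> 2 powr m \<Longrightarrow> y \<le> 2 powr m \<Longrightarrow> same_cell m x y"
  by (simp add: same_cell_def dyadic_index_eq_1)

lemma same_cell_dist_less: "same_cell m x y \<Longrightarrow> \<bar>x - y\<bar> < 2 powr m"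
  unfolding same_cell_def dyadic_index_def
  by (smt (verit, best) ceiling_correct ceiling_less_iff diff_divide_distrib le_divide_eq_1_pos
      less_ceiling_iff powr_gt_zero)

lemma ex_powr_int_ge: "\<exists>m::int. r \<le> 2 powr m"
proof -
  obtain n :: nat where "r < 2 ^ n" using real_arch_pow[of 2 r] by auto
  then show ?thesis by (intro exI[of _ "int n"]) (simp add: powr_realpow)
qed

lemma ex_powr_int_less: "0 < r \<Longrightarrow> \<exists>m::int. 2 powr m < r"
proof -
  assume "0 < r"
  then obtain n :: nat where "(1 / 2) ^ n < r" using real_arch_pow_inv[of r "1 / 2"] by auto
  then show ?thesis
    by (intro exI[of _ "- int n"]) (simp add: powr_minus_divide powr_realpow power_one_over)
qed

lemma int_upward_closed_threshold:
  fixes P :: "int \<Rightarrow> bool"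
  assumes up: "\<And>m. P m \<Longrightarrow> P (m + 1)" and "P m0" and bounded: "\<And>m. P m \<Longrightarrow> b \<le> m"
  obtains L where "\<And>m. P m \<longleftrightarrow> L \<le> m"
proof -
  have P_mono: "P m'" if "P m" "m \<le> m'" for m m'
    using that(2) by (induction rule: int_ge_induct) (auto intro: up simp: that(1))
  define n0 where "n0 = (LEAST n. P (b + int n))"
  have "P (b + int (nat (m0 - b)))" using \<open>P m0\<close> bounded[OF \<open>P m0\<close>] by simp
  then have "P (b + int n0)" unfolding n0_def by (rule LeastI)
  moreover have "b + int n0 \<le> m" if "P m" for m
  proof -
    have "n0 \<le> nat (m - b)" unfolding n0_def using that bounded[OF that] by (intro Least_le) simp
    then show ?thesis using bounded[OF that] by linarith
  qed
  ultimately show ?thesis using P_mono that by blast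
qed

lemma dyadic_lengths_eq:
  assumes "0 < x" "0 < y"
  shows "{measure lborel I | I. I \<in> dyadic_family \<and> x \<in> I \<and> y \<in> I} = {2 powr m | m. same_cell m x y}"
proof (intro equalityI subsetI)
  fix r assume "r \<in> {measure lborel I | I. I \<in> dyadic_family \<and> x \<in> I \<and> y \<in> I}"
  then obtain j k where r: "r = measure lborel (dyadic_cell (- j) k)"
    and "x \<in> dyadic_cell (- j) k" "y \<in> dyadic_cell (- j) k"
    unfolding dyadic_family_def dyadic_interval_eq_cell by auto
  then have "same_cell (- j) x y" by (simp add: same_cell_def mem_dyadic_cell_iff)
  moreover have "r = 2 powr (- j)" unfolding r dyadic_cell_def by (simp add: algebra_simps)
  ultimately show "r \<in> {2 powr m | m. same_cell m x y}" by blast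
next
  fix r assume "r \<in> {2 powr m | m. same_cell m x y}"
  then obtain m where r: "r = 2 powr m" and "same_cell m x y" by blast
  define k where "k = nat (dyadic_index m x - 1)"
  have "dyadic_index m x = int k + 1" using dyadic_index_pos[OF assms(1), of m] unfolding k_def by simp
  then have "x \<in> dyadic_interval (- m) k" "y \<in> dyadic_interval (- m) k"
    using \<open>same_cell m x y\<close> by (simp_all add: dyadic_interval_eq_cell mem_dyadic_cell_iff same_cell_def)
  moreover have "r = measure lborel (dyadic_interval (- m) k)"
    unfolding r dyadic_interval_def by (simp add: algebra_simps)
  ultimately show "r \<in> {measure lborel I | I. I \<in> dyadic_family \<and> x \<in> I \<and> y \<in> I}"
    unfolding dyadic_family_def by blast
qed

lemma dyadic_dist_level:
  assumes "0 < x" "0 < y" "x \<noteq> y"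
  obtains L :: int where "\<And>m. same_cell m x y \<longleftrightarrow> L \<le> m" and "dyadic_dist x y = 2 powr L"
proof -
  obtain m0 :: int where "max x y \<le> 2 powr m0" using ex_powr_int_ge by blast
  then have "same_cell m0 x y" using assms by (intro same_cell_if_le_powr) auto
  obtain b :: int where b: "2 powr b < \<bar>x - y\<bar>" using ex_powr_int_less assms by force
  have up: "same_cell (m + 1) x y" if "same_cell m x y" for m
    using same_cell_mono[OF that] by simp
  have bounded: "b \<le> m" if "same_cell m x y" for m
    using same_cell_dist_less[OF that] b by (smt (verit) powr_less_cancel_iff of_int_le_iff)
  obtain L where L: "\<And>m. same_cell m x y \<longleftrightarrow> L \<le> m"
    using int_upward_closed_threshold[of "\<lambda>m. same_cell m x y", OF up \<open>same_cell m0 x y\<close> bounded]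
    by blast
  have "dyadic_dist x y = Inf {2 powr m | m. same_cell m x y}"
    unfolding dyadic_dist_def dyadic_lengths_eq[OF assms(1,2)] ..
  also have "\<dots> = 2 powr L"
    using L by (intro cInf_eq_minimum) auto
  finally show ?thesis using L that by blast
qed

lemma dyadic_dist_pos:
  assumes "0 < x" "0 < y" "x \<noteq> y"
  shows "0 < dyadic_dist x y"
  by (rule dyadic_dist_level[OF assms]) simp

lemma dyadic_dist_self: "0 < x \<Longrightarrow> dyadic_dist x x = 0"
proof -
  assume "0 < x"
  let ?S = "{2 powr m | m::int. True}"
  have dist: "dyadic_dist x x = Inf ?S"
    unfolding dyadic_dist_def dyadic_lengths_eq[OF \<open>0 < x\<close> \<open>0 < x\<close>] same_cell_def by simp
  have "0 \<le> Inf ?S" by (rule cInf_greatest) auto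
  moreover have "\<not> 0 < Inf ?S"
  proof
    assume "0 < Inf ?S"
    then obtain m :: int where "2 powr m < Inf ?S" using ex_powr_int_less by blast
    moreover have "Inf ?S \<le> 2 powr m" by (rule cInf_lower) (auto intro: bdd_belowI[of _ 0])
    ultimately show False by simp
  qed
  ultimately show ?thesis unfolding dist by simp
qed

definition scale_weight :: "real \<Rightarrow> int \<Rightarrow> real" where
  "scale_weight p m = (1 - 2 powr p) * 2 powr (p * m)"

text \<open>\<open>(\<Sum>n. bilateral_term c f n)\<close> is the sum of \<open>f\<close> over \<open>\<int>\<close>, enumerated outwards from \<open>c\<close>.\<close>
definition bilateral_term :: "int \<Rightarrow> (int \<Rightarrow> 'a::plus) \<Rightarrow> nat \<Rightarrow> 'a" where
  "bilateral_term c f n = f (c + int n) + f (c - int n - 1)"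

lemma scale_weight_nonneg: "p < 0 \<Longrightarrow> 0 \<le> scale_weight p m"
  unfolding scale_weight_def by (simp add: powr_less_one less_imp_le)

lemma scale_weight_mult_powr:
  "scale_weight p m * 2 powr m = (1 - 2 powr p) * 2 powr ((p + 1) * m)"
  unfolding scale_weight_def by (simp add: powr_add[symmetric] algebra_simps)

lemma dyadic_dist_powr_sums:
  assumes "0 < x" "0 < y" "x \<noteq> y" "p < 0"
  shows "bilateral_term c (\<lambda>m. scale_weight p m * of_bool (same_cell m x y))
    sums (dyadic_dist x y powr p)"
proof -
  obtain L :: int where L: "\<And>m. same_cell m x y \<longleftrightarrow> L \<le> m" and dist: "dyadic_dist x y = 2 powr L"
    using dyadic_dist_level[OF assms(1-3)] by blast
  define f where "f m = 2 powr (p * max m L)" for m :: int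
  have step: "scale_weight p m * of_bool (same_cell m x y) = f m - f (m + 1)" for m
  proof (cases "L \<le> m")
    case True
    then have "f m = 2 powr (p * m)" "f (m + 1) = 2 powr (p * m) * 2 powr p"
      unfolding f_def by (simp_all add: max_def powr_add[symmetric] algebra_simps)
    then show ?thesis using True L unfolding scale_weight_def by (simp add: algebra_simps)
  qed (simp add: L f_def max_def)
  have partial: "(\<Sum>i<n. bilateral_term c (\<lambda>m. scale_weight p m * of_bool (same_cell m x y)) i)
      = f (c - int n) - f (c + int n)" for n
    by (induction n) (simp_all add: bilateral_term_def step algebra_simps)
  have "f (c - int n) - f (c + int n) = 2 powr (p * L) - 2 powr (p * c) * (2 powr p) ^ n"
    if "nat \<bar>c - L\<bar> \<le> n" for n
  proof -
    have "c - int n \<le> L" "L \<le> c + int n" using that by auto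
    then show ?thesis
      by (simp add: f_def max_def powr_realpow[symmetric] powr_powr powr_add[symmetric]
          algebra_simps)
  qed
  then have "eventually (\<lambda>n. f (c - int n) - f (c + int n)
      = 2 powr (p * L) - 2 powr (p * c) * (2 powr p) ^ n) sequentially"
    by (rule eventually_sequentiallyI)
  moreover have "(\<lambda>n. 2 powr (p * L) - 2 powr (p * c) * (2 powr p) ^ n)
      \<longlonglongrightarrow> 2 powr (p * L) - 2 powr (p * c) * 0"
    using assms(4) by (intro tendsto_intros LIMSEQ_power_zero) (auto simp: powr_less_one)
  ultimately have "(\<lambda>n. f (c - int n) - f (c + int n)) \<longlonglongrightarrow> 2 powr (p * L)"
    by (simp add: tendsto_cong)
  then show ?thesis
    unfolding sums_def partial dist by (simp add: powr_powr mult.commute)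
qed

lemma geometric_powr_sums:
  assumes "0 < r"
  shows "(\<lambda>n. 2 powr (a - r * real n)) sums (2 powr a / (1 - 2 powr - r))"
proof -
  have "(\<lambda>n. 2 powr a * (2 powr - r) ^ n) sums (2 powr a * (1 / (1 - 2 powr - r)))"
    using assms by (intro sums_mult geometric_sums) (simp add: powr_less_one)
  then show ?thesis by (simp add: powr_realpow[symmetric] powr_powr powr_add[symmetric])
qed

lemma bilateral_sums_powr_below:
  fixes r :: real
  assumes "0 < r" "t < c"
  shows "bilateral_term c (\<lambda>m. of_bool (m \<le> t) * 2 powr (r * m))
    sums (2 powr (r * t) / (1 - 2 powr - r))"
proof -
  define d where "d = nat (c - 1 - t)"
  have "bilateral_term c (\<lambda>m. of_bool (m \<le> t) * 2 powr (r * m)) (n + d) = 2 powr (r * t - r * n)"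
    for n
    using assms unfolding bilateral_term_def d_def by (simp add: algebra_simps)
  then have "(\<lambda>n. bilateral_term c (\<lambda>m. of_bool (m \<le> t) * 2 powr (r * m)) (n + d))
      sums (2 powr (r * t) / (1 - 2 powr - r))"
    using geometric_powr_sums[OF assms(1)] by simp
  moreover have "bilateral_term c (\<lambda>m. of_bool (m \<le> t) * 2 powr (r * m)) n = 0" if "n < d" for n
    using that assms unfolding bilateral_term_def d_def by simp
  ultimately show ?thesis by (simp add: sums_zero_iff_shift)
qed

lemma bilateral_sums_powr_above:
  fixes r :: real
  assumes "0 < r" "c \<le> t"
  shows "bilateral_term c (\<lambda>m. of_bool (t \<le> m) * 2 powr (- r * m))
    sums (2 powr (- r * t) / (1 - 2 powr - r))"
proof -
  define d where "d = nat (t - c)"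
  have "bilateral_term c (\<lambda>m. of_bool (t \<le> m) * 2 powr (- r * m)) (n + d) = 2 powr (- r * t - r * n)"
    for n
    using assms unfolding bilateral_term_def d_def by (simp add: algebra_simps)
  then have "(\<lambda>n. bilateral_term c (\<lambda>m. of_bool (t \<le> m) * 2 powr (- r * m)) (n + d))
      sums (2 powr (- r * t) / (1 - 2 powr - r))"
    using geometric_powr_sums[OF assms(1)] by simp
  moreover have "bilateral_term c (\<lambda>m. of_bool (t \<le> m) * 2 powr (- r * m)) n = 0" if "n < d" for n
    using that assms unfolding bilateral_term_def d_def by simp
  ultimately show ?thesis by (simp add: sums_zero_iff_shift)
qed

lemma weighted_Cauchy_Schwarz:
  fixes e A B :: "'i \<Rightarrow> real"
  assumes "\<And>i. i \<in> I \<Longrightarrow> 0 \<le> e i" "\<And>i. i \<in> I \<Longrightarrow> 0 \<le> A i" "\<And>i. i \<in> I \<Longrightarrow> 0 \<le> B i"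
    and "\<And>i. i \<in> I \<Longrightarrow> A i * B i = g"
  shows "g * (\<Sum>i\<in>I. e i)\<^sup>2 \<le> (\<Sum>i\<in>I. e i * A i) * (\<Sum>i\<in>I. e i * B i)"
proof (cases "I = {}")
  case False
  then have "0 \<le> g" using assms(2-4) by (metis ex_in_conv mult_nonneg_nonneg)
  have "sqrt (e i * A i) * sqrt (e i * B i) = sqrt g * e i" if "i \<in> I" for i
  proof -
    have "sqrt (e i * A i) * sqrt (e i * B i) = sqrt ((e i)\<^sup>2 * (A i * B i))"
      by (simp add: real_sqrt_mult[symmetric] power2_eq_square ac_simps)
    also have "\<dots> = sqrt g * e i" using assms(1,4)[OF that] by (simp add: real_sqrt_mult)
    finally show ?thesis .
  qed
  then have "(\<Sum>i\<in>I. sqrt (e i * A i) * sqrt (e i * B i)) = sqrt g * (\<Sum>i\<in>I. e i)"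
    by (simp add: sum_distrib_left)
  moreover have "(\<Sum>i\<in>I. sqrt (e i * A i) * sqrt (e i * B i))\<^sup>2 \<le>
      (\<Sum>i\<in>I. (sqrt (e i * A i))\<^sup>2) * (\<Sum>i\<in>I. (sqrt (e i * B i))\<^sup>2)"
    by (rule Cauchy_Schwarz_ineq_sum)
  moreover have "(\<Sum>i\<in>I. (sqrt (e i * A i))\<^sup>2) = (\<Sum>i\<in>I. e i * A i)"
    and "(\<Sum>i\<in>I. (sqrt (e i * B i))\<^sup>2) = (\<Sum>i\<in>I. e i * B i)"
    using assms(1-3) by (auto intro!: sum.cong)
  ultimately show ?thesis using \<open>0 \<le> g\<close> by (simp add: power_mult_distrib)
qed simp

lemma telescoping_layers:
  fixes u :: "int \<Rightarrow> real" and m1 M :: int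
  assumes fine: "\<And>m. m \<le> m1 \<Longrightarrow> u m = N" and coarse: "\<And>m. M \<le> m \<Longrightarrow> u m = 0" and "m1 < M"
  shows "u m = (\<Sum>i<nat (M - m1). (u (m1 + i) - u (m1 + i + 1)) * of_bool (m \<le> m1 + i))"
proof (cases "M \<le> m")
  case True
  then show ?thesis using coarse by (auto intro!: sum.neutral)
next
  case False
  define i0 where "i0 = nat (max m m1 - m1)"
  have "(\<Sum>i<nat (M - m1). (u (m1 + i) - u (m1 + i + 1)) * of_bool (m \<le> m1 + i))
      = (\<Sum>i\<in>{i0..<nat (M - m1)}. u (m1 + i) - u (m1 + int (Suc i)))"
    using False unfolding i0_def by (intro sum.mono_neutral_cong_right) (auto simp: ac_simps)
  also have "\<dots> = u (m1 + i0) - u (m1 + int (nat (M - m1)))"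
  proof -
    have "i0 \<le> nat (M - m1)" using False unfolding i0_def by auto
    from sum_Suc_diff'[OF this, of "\<lambda>i. - u (m1 + int i)"] show ?thesis by simp
  qed
  also have "\<dots> = u m"
    using False assms(3) fine[of m] fine[of m1] coarse[of M] unfolding i0_def by (cases "m \<le> m1") auto
  finally show ?thesis ..
qed

lemma dgamma_factorization:
  assumes "0 < s"
  shows "(1 - 2 powr (2 * s - 1)) * (2 powr (2 * s * t) / (1 - 2 powr - (2 * s)))
    * (2 * (1 - 2 powr (- (2 * s + 1))) * (2 powr (- (2 * s) * (t + 1)) / (1 - 2 powr - (2 * s))))
    = dgamma s"
proof -
  define r where "r = (2::real) powr (2 * s)"
  have "1 < r" unfolding r_def using assms by simp
  then have r: "r \<noteq> 0" "r - 1 \<noteq> 0" "r \<noteq> 1" by auto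
  have "2 powr (2 * s + 1) = 2 * r"
    unfolding r_def by (simp add: powr_add)
  then have e1: "2 powr (- (2 * s + 1)) = 1 / (2 * r)"
    by (metis powr_minus_divide)
  have e2: "2 powr (2 * s - 1) = r / 2" and e3: "2 powr (1 - 2 * s) = 2 / r"
    and e4: "2 powr (- (2 * s)) = 1 / r"
    unfolding r_def by (simp_all add: powr_diff powr_minus_divide)
  have product: "2 powr (2 * s * t) * 2 powr (- (2 * s) * (t + 1)) = 1 / r"
    unfolding e4[symmetric] by (simp add: powr_add[symmetric] algebra_simps)
  have rearrange: "a * (X / d) * (2 * b * (Y / d)) = 2 * a * b * (X * Y) / d\<^sup>2" for a b X Y d :: real
    by (simp add: power2_eq_square)
  have "(1 - 2 powr (2 * s - 1)) * (2 powr (2 * s * t) / (1 - 2 powr - (2 * s)))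
      * (2 * (1 - 2 powr (- (2 * s + 1))) * (2 powr (- (2 * s) * (t + 1)) / (1 - 2 powr - (2 * s))))
      = 2 * (1 - r / 2) * (1 - 1 / (2 * r)) * (1 / r) / (1 - 1 / r)\<^sup>2"
    unfolding rearrange product e1 e2 e4 ..
  also have "\<dots> = (2 - r) * (2 * r - 1) / (2 * (r - 1)\<^sup>2)"
  proof -
    have "1 - r / 2 = (2 - r) / 2" "1 - 1 / (2 * r) = (2 * r - 1) / (2 * r)"
      "(1 - 1 / r)\<^sup>2 = (r - 1)\<^sup>2 / r\<^sup>2"
      using r by (simp_all add: field_simps)
    then show ?thesis using r by (simp add: field_simps) algebra
  qed
  also have "\<dots> = dgamma s"
  proof -
    have "(2 / r - 1) / (1 - 1 / r) = (2 - r) / (r - 1)"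
      and "(2 - 1 / r) / (1 - 1 / r) = (2 * r - 1) / (r - 1)"
      using r by (simp_all add: field_simps)
    then show ?thesis
      unfolding dgamma_def dgamma1_def dgamma2_def e3 e4 by (simp add: power2_eq_square)
  qed
  finally show ?thesis .
qed

lemma scale_weight_layers_sums_below:
  fixes s :: real and e :: "'i \<Rightarrow> real" and t :: "'i \<Rightarrow> int"
  assumes "0 < s" and "\<And>i. i \<in> I \<Longrightarrow> t i < c" and v: "\<And>m. v m = (\<Sum>i\<in>I. e i * of_bool (m \<le> t i))"
  shows "bilateral_term c (\<lambda>m. scale_weight (2 * s - 1) m * (2 powr m * v m))
    sums (\<Sum>i\<in>I. e i * ((1 - 2 powr (2 * s - 1)) * (2 powr (2 * s * t i) / (1 - 2 powr - (2 * s)))))"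
proof -
  have "scale_weight (2 * s - 1) m * (2 powr m * v m)
      = (\<Sum>i\<in>I. e i * ((1 - 2 powr (2 * s - 1)) * (of_bool (m \<le> t i) * 2 powr (2 * s * m))))" for m
    using scale_weight_mult_powr[of "2 * s - 1" m] unfolding v sum_distrib_left
    by (auto intro!: sum.cong simp: ac_simps)
  then have "bilateral_term c (\<lambda>m. scale_weight (2 * s - 1) m * (2 powr m * v m)) = (\<lambda>n. \<Sum>i\<in>I.
      e i * ((1 - 2 powr (2 * s - 1)) * bilateral_term c (\<lambda>m. of_bool (m \<le> t i) * 2 powr (2 * s * m)) n))"
    by (intro ext) (simp only: bilateral_term_def sum.distrib[symmetric] distrib_left)
  then show ?thesis
    using assms by (simp only:) (intro sums_sum sums_mult bilateral_sums_powr_below; simp)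
qed

lemma scale_weight_layers_sums_above:
  fixes s :: real and e :: "'i \<Rightarrow> real" and t :: "'i \<Rightarrow> int"
  assumes "0 < s" and "\<And>i. i \<in> I \<Longrightarrow> c \<le> t i" and v: "\<And>m. v m = (\<Sum>i\<in>I. e i * of_bool (t i \<le> m))"
  shows "bilateral_term c (\<lambda>m. scale_weight (- (2 * s + 1)) m * (2 * 2 powr m * v m))
    sums (\<Sum>i\<in>I. e i
      * (2 * (1 - 2 powr (- (2 * s + 1))) * (2 powr (- (2 * s) * t i) / (1 - 2 powr - (2 * s)))))"
proof -
  have "scale_weight (- (2 * s + 1)) m * (2 * 2 powr m * v m) = (\<Sum>i\<in>I.
      e i * (2 * (1 - 2 powr (- (2 * s + 1))) * (of_bool (t i \<le> m) * 2 powr (- (2 * s) * m))))" for m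
    using scale_weight_mult_powr[of "- (2 * s + 1)" m] unfolding v sum_distrib_left
    by (auto intro!: sum.cong simp: ac_simps)
  then have "bilateral_term c (\<lambda>m. scale_weight (- (2 * s + 1)) m * (2 * 2 powr m * v m)) = (\<lambda>n. \<Sum>i\<in>I.
      e i * (2 * (1 - 2 powr (- (2 * s + 1)))
        * bilateral_term c (\<lambda>m. of_bool (t i \<le> m) * 2 powr (- (2 * s) * m)) n))"
    by (intro ext) (simp only: bilateral_term_def sum.distrib[symmetric] distrib_left)
  then show ?thesis
    using assms by (simp only:) (intro sums_sum sums_mult bilateral_sums_powr_above; simp)
qed

lemma bilateral_series_product_lower_bound:
  fixes u :: "int \<Rightarrow> real" and m1 M :: int
  assumes s: "0 < s" "s < 1/2"
    and fine: "\<And>m. m \<le> m1 \<Longrightarrow> u m = N" and coarse: "\<And>m. M \<le> m \<Longrightarrow> u m = 0"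
    and antitone: "\<And>m. u m \<le> u (m - 1)" and "m1 < M"
  defines "Q \<equiv> bilateral_term M (\<lambda>m. scale_weight (2 * s - 1) m * (2 powr m * u m))"
    and "E \<equiv> bilateral_term (m1 + 1) (\<lambda>m. scale_weight (- (2 * s + 1)) m * (2 * 2 powr m * (N - u m)))"
  shows "summable E" and "dgamma s * N\<^sup>2 \<le> suminf Q * suminf E"
proof -
  define K where "K = nat (M - m1)"
  define e where "e i = u (m1 + int i) - u (m1 + int i + 1)" for i :: nat
  define A where "A i = (1 - 2 powr (2 * s - 1))
      * (2 powr (2 * s * (m1 + int i)) / (1 - 2 powr - (2 * s)))"
    for i :: nat
  define B where "B i = 2 * (1 - 2 powr (- (2 * s + 1)))
      * (2 powr (- (2 * s) * (m1 + int i + 1)) / (1 - 2 powr - (2 * s)))" for i :: nat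
  have layers: "u m = (\<Sum>i<K. e i * of_bool (m \<le> m1 + int i))" for m
    unfolding K_def e_def using telescoping_layers[OF fine coarse \<open>m1 < M\<close>] .
  have sum_e: "(\<Sum>i<K. e i) = N"
    using layers[of m1] fine[of m1] by simp
  have "N - u m = (\<Sum>i<K. e i * (1 - of_bool (m \<le> m1 + int i)))" for m
    unfolding layers sum_e[symmetric] by (simp add: sum_subtractf algebra_simps)
  also have "\<dots> m = (\<Sum>i<K. e i * of_bool (m1 + int i + 1 \<le> m))" for m
    by (intro sum.cong) auto
  finally have N_minus_u: "N - u m = (\<Sum>i<K. e i * of_bool (m1 + int i + 1 \<le> m))" for m .
  have "Q sums (\<Sum>i<K. e i * A i)"
    unfolding Q_def A_def K_def using s(1) layers[unfolded K_def]
    by (intro scale_weight_layers_sums_below) auto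
  moreover have "E sums (\<Sum>i<K. e i * B i)"
    unfolding E_def B_def using s(1) N_minus_u by (intro scale_weight_layers_sums_above) auto
  moreover have "A i * B i = dgamma s" for i
    unfolding A_def B_def using dgamma_factorization[OF s(1), of "m1 + int i"] by (simp add: ac_simps)
  moreover have "0 \<le> A i" "0 \<le> B i" for i
  proof -
    have "2 powr (2 * s - 1) < 1" "2 powr (- (2 * s + 1)) < 1" "2 powr - (2 * s) < 1"
      using s by (auto intro!: powr_less_one)
    then show "0 \<le> A i" "0 \<le> B i" unfolding A_def B_def by simp_all
  qed
  moreover have "0 \<le> e i" for i
    unfolding e_def using antitone[of "m1 + int i + 1"] by simp
  ultimately show "summable E" and "dgamma s * N\<^sup>2 \<le> suminf Q * suminf E"
    using weighted_Cauchy_Schwarz[of "{..<K}" e A B "dgamma s"] by (auto simp: sums_iff sum_e)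
qed

lemma (in pair_sigma_finite) integrable_product:
  fixes f :: "'a \<Rightarrow> 'c::{real_normed_field, banach, second_countable_topology}"
  assumes f: "integrable M1 f" and g: "integrable M2 g"
  shows "integrable (M1 \<Otimes>\<^sub>M M2) (\<lambda>p. f (fst p) * g (snd p))"
proof (rule Fubini_integrable)
  have [measurable]: "f \<in> borel_measurable M1" "g \<in> borel_measurable M2"
    using f g by auto
  show "(\<lambda>p. f (fst p) * g (snd p)) \<in> borel_measurable (M1 \<Otimes>\<^sub>M M2)" by measurable
  have "integrable M1 (\<lambda>x. norm (f x) * (\<integral>y. norm (g y) \<partial>M2))"
    using f by (intro integrable_mult_left integrable_norm)
  then show "integrable M1 (\<lambda>x. \<integral>y. norm (f (fst (x, y)) * g (snd (x, y))) \<partial>M2)"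
    by (simp add: norm_mult)
  show "AE x in M1. integrable M2 (\<lambda>y. f (fst (x, y)) * g (snd (x, y)))"
    using g by (auto intro!: integrable_mult_right)
qed

lemma (in pair_sigma_finite) integral_product:
  fixes f :: "'a \<Rightarrow> 'c::{real_normed_field, banach, second_countable_topology}"
  assumes f: "integrable M1 f" and g: "integrable M2 g"
  shows "(\<integral>p. f (fst p) * g (snd p) \<partial>(M1 \<Otimes>\<^sub>M M2)) = integral\<^sup>L M1 f * integral\<^sup>L M2 g"
  using integral_fst'[OF integrable_product[OF f g]] by simp

lemma AE_lborel_pair_offdiagonal: "AE q in lborel \<Otimes>\<^sub>M lborel. fst q \<noteq> snd q"
proof (rule lborel_pair.AE_pair_measure)
  show "{q \<in> space (lborel \<Otimes>\<^sub>M lborel). fst q \<noteq> snd q} \<in> sets (lborel \<Otimes>\<^sub>M lborel)"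
    by measurable
  show "AE x in lborel. AE y in lborel. fst (x, y) \<noteq> snd (x, y)"
    using AE_lborel_singleton by (auto simp: eq_commute)
qed

definition same_cell_pairs :: "int \<Rightarrow> (real \<times> real) set" where
  "same_cell_pairs m = {q \<in> posquad. same_cell m (fst q) (snd q)}"

lemma dyadic_index_measurable[measurable]: "dyadic_index m \<in> borel \<rightarrow>\<^sub>M count_space UNIV"
  unfolding dyadic_index_def by measurable

lemma sets_dyadic_cell[measurable]: "dyadic_cell m k \<in> sets borel"
  unfolding dyadic_cell_def by simp

lemma sets_posquad[measurable]: "posquad \<in> sets (lborel \<Otimes>\<^sub>M lborel)"
  unfolding posquad_def by (intro pair_measureI) auto

lemma sets_same_cell_pairs[measurable]: "same_cell_pairs m \<in> sets (lborel \<Otimes>\<^sub>M lborel)"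
proof -
  have "same_cell_pairs m
      = posquad \<inter> {q \<in> space (lborel \<Otimes>\<^sub>M lborel). dyadic_index m (fst q) = dyadic_index m (snd q)}"
    unfolding same_cell_pairs_def same_cell_def by (auto simp: space_pair_measure)
  also have "\<dots> \<in> sets (lborel \<Otimes>\<^sub>M lborel)" by measurable
  finally show ?thesis .
qed

lemma indicator_same_cell_pairs:
  "(indicator (same_cell_pairs m) q :: 'a::semiring_1)
    = indicator posquad q * of_bool (same_cell m (fst q) (snd q))"
  unfolding same_cell_pairs_def by (simp add: indicator_def)

lemma emeasure_dyadic_cell: "emeasure lborel (dyadic_cell m k) = 2 powr m"
  unfolding dyadic_cell_def by (simp add: algebra_simps)

lemma measure_dyadic_cell: "measure lborel (dyadic_cell m k) = 2 powr m"
  unfolding measure_def emeasure_dyadic_cell by simp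

lemma integrable_dyadic_cell:
  fixes f :: "real \<Rightarrow> 'a::{real_normed_field, banach, second_countable_topology}"
  assumes [measurable]: "f \<in> borel_measurable lborel" and "\<And>x. norm (f x) \<le> B"
  shows "integrable lborel (\<lambda>x. indicator (dyadic_cell m k) x * f x)"
  by (rule integrableI_bounded_set[where A = "dyadic_cell m k" and B = B])
    (use assms(2) in \<open>auto simp: emeasure_dyadic_cell indicator_def\<close>)

lemma integral_dyadic_cell_const:
  fixes c :: "'a::{real_normed_field, banach, second_countable_topology}"
  shows "(\<integral>x. indicator (dyadic_cell m k) x * c \<partial>lborel) = of_real (2 powr m) * c"
proof -
  have "(\<lambda>x. indicator (dyadic_cell m k) x * c) = (\<lambda>x. of_real (indicator (dyadic_cell m k) x) * c)"
    by (auto simp: indicator_def)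
  then show ?thesis using measure_dyadic_cell[of m k] emeasure_dyadic_cell[of m k] by simp
qed

lemma indicator_dyadic_cell:
  "0 < x \<Longrightarrow> indicator (dyadic_cell m k) x = of_bool (k = nat (dyadic_index m x - 1))"
  using mem_dyadic_cell_iff[of x m k] dyadic_index_pos[of x m] by (auto simp: indicator_def)

lemma indicator_dyadic_cell_split:
  "(indicator (dyadic_cell m k) x :: 'a::semiring_1)
    = indicator (dyadic_cell (m - 1) (2 * k)) x + indicator (dyadic_cell (m - 1) (2 * k + 1)) x"
proof -
  have "dyadic_index m x = \<lceil>real_of_int (dyadic_index (m - 1) x) / 2\<rceil>"
    using dyadic_index_succ[of "m - 1" x] by simp
  then have "x \<in> dyadic_cell m k
      \<longleftrightarrow> dyadic_index (m - 1) x = 2 * int k + 1 \<or> dyadic_index (m - 1) x = 2 * int k + 2"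
    unfolding mem_dyadic_cell_iff by (simp add: ceiling_eq_iff) linarith
  then show ?thesis unfolding indicator_def mem_dyadic_cell_iff by auto
qed

definition cell_count :: "real \<Rightarrow> int \<Rightarrow> nat" where
  "cell_count R m = nat \<lceil>R / 2 powr m\<rceil>"

lemma dyadic_cell_beyond_count:
  assumes "cell_count R m \<le> k" "x \<in> dyadic_cell m k"
  shows "R < x"
proof -
  have "R / 2 powr m \<le> real (cell_count R m)"
    unfolding cell_count_def by linarith
  then have "R \<le> real (cell_count R m) * 2 powr m"
    by (simp add: field_simps)
  also have "\<dots> \<le> real k * 2 powr m" using assms(1) by (intro mult_right_mono) auto
  also have "\<dots> < x" using assms(2) unfolding dyadic_cell_def by simp
  finally show ?thesis .
qed

lemma dyadic_index_le_count:
  assumes "0 < x" "x \<le> R"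
  shows "nat (dyadic_index m x - 1) < cell_count R m"
proof -
  have "dyadic_index m x \<le> \<lceil>R / 2 powr m\<rceil>"
    unfolding dyadic_index_def using assms by (intro ceiling_mono divide_right_mono) auto
  then show ?thesis using dyadic_index_pos[OF assms(1), of m] unfolding cell_count_def by linarith
qed

lemma cell_count_pred_le: "cell_count R (m - 1) \<le> 2 * cell_count R m"
proof -
  define t where "t = R / 2 powr m"
  have "R / 2 powr real_of_int (m - 1) = 2 * t"
    unfolding t_def by (simp add: powr_diff)
  moreover have "\<lceil>2 * t\<rceil> \<le> 2 * \<lceil>t\<rceil>"
    by (simp add: ceiling_le_iff)
  ultimately have "\<lceil>R / 2 powr real_of_int (m - 1)\<rceil> \<le> 2 * \<lceil>t\<rceil>"
    by (simp only:)
  then have "cell_count R (m - 1) \<le> nat (2 * \<lceil>t\<rceil>)"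
    unfolding cell_count_def by (rule nat_mono)
  then show ?thesis unfolding cell_count_def t_def by (simp add: nat_mult_distrib)
qed

lemma indicator_pos_eq_sum_cells:
  fixes G :: "real \<Rightarrow> 'a::comm_ring_1"
  assumes "\<And>x. R < x \<Longrightarrow> G x = 0"
  shows "indicator {0<..} x * G x = (\<Sum>k<cell_count R m. indicator (dyadic_cell m k) x * G x)"
proof (cases "0 < x")
  case True
  then have "(\<Sum>k<cell_count R m. indicator (dyadic_cell m k) x * G x)
      = of_bool (nat (dyadic_index m x - 1) < cell_count R m) * G x"
    by (simp add: indicator_dyadic_cell of_bool_def if_distrib if_distribR sum.If_cases)
  also have "\<dots> = indicator {0<..} x * G x"
    using True assms dyadic_index_le_count[OF True, of R m] by (cases "x \<le> R") auto
  finally show ?thesis ..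
next
  case False
  then have "x \<notin> dyadic_cell m k" for k using dyadic_cell_pos by blast
  then show ?thesis using False by simp
qed

lemma indicator_same_cell_pairs_eq_sum_cells:
  fixes G :: "real \<times> real \<Rightarrow> 'a::comm_ring_1"
  assumes "\<And>x y. R < x \<Longrightarrow> R < y \<Longrightarrow> G (x, y) = 0"
  shows "indicator (same_cell_pairs m) q * G q
    = (\<Sum>k<cell_count R m. indicator (dyadic_cell m k \<times> dyadic_cell m k) q * G q)"
proof -
  obtain x y where q: "q = (x, y)" by (cases q)
  show ?thesis
  proof (cases "q \<in> same_cell_pairs m")
    case True
    then have xy: "0 < x" "0 < y" "dyadic_index m x = dyadic_index m y"
      unfolding q same_cell_pairs_def posquad_def same_cell_def by auto
    define k0 where "k0 = nat (dyadic_index m x - 1)"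
    have "x \<in> dyadic_cell m k0" "y \<in> dyadic_cell m k0"
      unfolding k0_def using xy dyadic_index_pos[of x m] mem_dyadic_cell_iff by auto
    have "indicator (dyadic_cell m k \<times> dyadic_cell m k) q * G q = (if k = k0 then G q else 0)" for k
      unfolding q k0_def using xy by (simp add: indicator_times indicator_dyadic_cell)
    then have "(\<Sum>k<cell_count R m. indicator (dyadic_cell m k \<times> dyadic_cell m k) q * G q)
        = (if k0 < cell_count R m then G q else 0)"
      by simp
    also have "\<dots> = indicator (same_cell_pairs m) q * G q"
    proof (cases "k0 < cell_count R m")
      case False
      then have "cell_count R m \<le> k0" by simp
      then have "R < x" "R < y"
        using dyadic_cell_beyond_count \<open>x \<in> dyadic_cell m k0\<close> \<open>y \<in> dyadic_cell m k0\<close> by blast+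
      then show ?thesis using assms False unfolding q by simp
    qed (use True in simp)
    finally show ?thesis ..
  next
    case False
    then have "\<not> (x \<in> dyadic_cell m k \<and> y \<in> dyadic_cell m k)" for k
      using dyadic_cell_pos[of x m k] dyadic_cell_pos[of y m k]
      unfolding q same_cell_pairs_def posquad_def same_cell_def by (auto simp: mem_dyadic_cell_iff)
    then have "indicator (dyadic_cell m k \<times> dyadic_cell m k) q = (0::'a)" for k
      unfolding q by (simp add: indicator_def)
    then show ?thesis using False by simp
  qed
qed

lemma integral_same_cell_pairs_product:
  fixes f g :: "real \<Rightarrow> complex"
  assumes [measurable]: "f \<in> borel_measurable lborel" "g \<in> borel_measurable lborel"
    and "\<And>x. norm (f x) \<le> Bf" "\<And>x. norm (g x) \<le> Bg"
    and "\<And>x y. R < x \<Longrightarrow> R < y \<Longrightarrow> f x * g y = 0"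
  shows "integrable (lborel \<Otimes>\<^sub>M lborel) (\<lambda>q. indicator (same_cell_pairs m) q * (f (fst q) * g (snd q)))"
    and "(\<integral>q. indicator (same_cell_pairs m) q * (f (fst q) * g (snd q)) \<partial>(lborel \<Otimes>\<^sub>M lborel))
      = (\<Sum>k<cell_count R m. (\<integral>x. indicator (dyadic_cell m k) x * f x \<partial>lborel)
                             * (\<integral>y. indicator (dyadic_cell m k) y * g y \<partial>lborel))"
proof -
  have split: "indicator (same_cell_pairs m) q * (f (fst q) * g (snd q))
      = (\<Sum>k<cell_count R m. indicator (dyadic_cell m k) (fst q) * f (fst q)
                             * (indicator (dyadic_cell m k) (snd q) * g (snd q)))" for q
    using indicator_same_cell_pairs_eq_sum_cells[of R "\<lambda>q. f (fst q) * g (snd q)" m q] assms(5)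
    by (simp add: indicator_times ac_simps)
  have cell_f: "integrable lborel (\<lambda>x. indicator (dyadic_cell m k) x * f x)"
    and cell_g: "integrable lborel (\<lambda>x. indicator (dyadic_cell m k) x * g x)" for k
    using integrable_dyadic_cell[OF assms(1,3)] integrable_dyadic_cell[OF assms(2,4)] by auto
  show "integrable (lborel \<Otimes>\<^sub>M lborel) (\<lambda>q. indicator (same_cell_pairs m) q * (f (fst q) * g (snd q)))"
    unfolding split using lborel_pair.integrable_product[OF cell_f cell_g] by auto
  show "(\<integral>q. indicator (same_cell_pairs m) q * (f (fst q) * g (snd q)) \<partial>(lborel \<Otimes>\<^sub>M lborel))
      = (\<Sum>k<cell_count R m. (\<integral>x. indicator (dyadic_cell m k) x * f x \<partial>lborel)
                             * (\<integral>y. indicator (dyadic_cell m k) y * g y \<partial>lborel))"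
    unfolding split using lborel_pair.integrable_product[OF cell_f cell_g]
    by (simp add: lborel_pair.integral_product[OF cell_f cell_g])
qed

lemma offdiagonal_kernel_sums:
  fixes z :: complex and q :: "real \<times> real" and c :: int
  assumes "p < 0"
  defines "F \<equiv> \<lambda>n. of_bool (fst q \<noteq> snd q)
    * bilateral_term c (\<lambda>m. of_real (scale_weight p m) * (indicator (same_cell_pairs m) q * z)) n"
  shows "F sums (indicator posquad q * (of_real (dyadic_dist (fst q) (snd q) powr p) * z))"
    and "summable (\<lambda>n. norm (F n))"
proof -
  have "F sums (indicator posquad q * (of_real (dyadic_dist (fst q) (snd q) powr p) * z))
    \<and> summable (\<lambda>n. norm (F n))"
  proof (cases "q \<in> posquad \<and> fst q \<noteq> snd q")
    case True
    then have q: "0 < fst q" "0 < snd q" "fst q \<noteq> snd q" unfolding posquad_def by auto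
    let ?kernel = "bilateral_term c (\<lambda>m. scale_weight p m * of_bool (same_cell m (fst q) (snd q)))"
    have F_eq: "F n = of_real (?kernel n) * z" for n
      using True unfolding F_def bilateral_term_def
      by (simp add: indicator_same_cell_pairs algebra_simps)
    have kernel: "?kernel sums (dyadic_dist (fst q) (snd q) powr p)"
      using dyadic_dist_powr_sums[OF q \<open>p < 0\<close>] .
    have "0 \<le> ?kernel n" for n
      using scale_weight_nonneg[OF \<open>p < 0\<close>] by (simp add: bilateral_term_def)
    then have "norm (F n) = ?kernel n * norm z" for n
      unfolding F_eq by (simp add: norm_mult)
    then show ?thesis
      unfolding F_eq using True summable_mult2[OF sums_summable[OF kernel]]
      by (simp add: sums_mult2 sums_of_real kernel)
  next
    case False
    then have F_0: "F = (\<lambda>n. 0)"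
      unfolding F_def bilateral_term_def by (auto simp: indicator_same_cell_pairs)
    have H_0: "indicator posquad q * (of_real (dyadic_dist (fst q) (snd q) powr p) * z) = 0"
      using False dyadic_dist_self unfolding posquad_def by (auto simp: indicator_def)
    show ?thesis unfolding F_0 H_0 by simp
  qed
  then show "F sums (indicator posquad q * (of_real (dyadic_dist (fst q) (snd q) powr p) * z))"
    and "summable (\<lambda>n. norm (F n))" by auto
qed

lemma dyadic_kernel_integral:
  fixes G :: "real \<times> real \<Rightarrow> complex" and W :: "int \<Rightarrow> real"
  assumes [measurable]: "G \<in> borel_measurable (lborel \<Otimes>\<^sub>M lborel)" and "p < 0"
    and int_G: "\<And>m. integrable (lborel \<Otimes>\<^sub>M lborel) (\<lambda>q. indicator (same_cell_pairs m) q * G q)"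
    and bound: "\<And>m. (\<integral>q. indicator (same_cell_pairs m) q * norm (G q) \<partial>(lborel \<Otimes>\<^sub>M lborel)) \<le> W m"
    and summable_W: "summable (bilateral_term c (\<lambda>m. scale_weight p m * W m))"
  defines "H \<equiv> \<lambda>q. indicator posquad q * (of_real (dyadic_dist (fst q) (snd q) powr p) * G q)"
  shows "integrable (lborel \<Otimes>\<^sub>M lborel) H"
    and "bilateral_term c (\<lambda>m. of_real (scale_weight p m)
          * (\<integral>q. indicator (same_cell_pairs m) q * G q \<partial>(lborel \<Otimes>\<^sub>M lborel)))
        sums integral\<^sup>L (lborel \<Otimes>\<^sub>M lborel) H"
proof -
  let ?M = "lborel \<Otimes>\<^sub>M lborel"
  let ?level = "\<lambda>m q. indicator (same_cell_pairs m) q * G q"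
  define F0 where "F0 n q = bilateral_term c (\<lambda>m. of_real (scale_weight p m) * ?level m q) n" for n q
  \<comment> \<open>The expansion of \<open>\<delta>^p\<close> fails on the diagonal, a null set, which is therefore cut out.\<close>
  define F where "F n q = of_bool (fst q \<noteq> snd q) * F0 n q" for n q
  have [measurable]: "F0 n \<in> borel_measurable ?M" for n
    unfolding F0_def bilateral_term_def by measurable
  have [measurable]: "F n \<in> borel_measurable ?M" for n
    unfolding F_def by measurable
  have F_AE: "AE q in ?M. F0 n q = F n q" for n
    using AE_lborel_pair_offdiagonal by eventually_elim (simp add: F_def)
  have int_F0: "integrable ?M (F0 n)" for n
    unfolding F0_def bilateral_term_def
    by (intro Bochner_Integration.integrable_add integrable_mult_right int_G)
  then have int_F: "integrable ?M (F n)" for n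
    by (rule integrable_cong_AE_imp[OF _ _ F_AE]) measurable
  have integral_F: "integral\<^sup>L ?M (F n)
      = bilateral_term c (\<lambda>m. of_real (scale_weight p m) * integral\<^sup>L ?M (?level m)) n" for n
  proof -
    have "integral\<^sup>L ?M (F n) = integral\<^sup>L ?M (F0 n)"
      using F_AE[of n] by (intro integral_cong_AE) (auto elim: AE_mp)
    then show ?thesis unfolding F0_def bilateral_term_def by (simp add: int_G)
  qed
  have "integral\<^sup>L ?M (\<lambda>q. norm (F n q)) \<le> integral\<^sup>L ?M (\<lambda>q. norm (F0 n q))" for n
    by (intro integral_mono integrable_norm int_F int_F0) (simp add: F_def norm_mult)
  also have "\<dots> n \<le> bilateral_term c (\<lambda>m. scale_weight p m * W m) n" for n
  proof -
    have "norm (F0 n q) \<le> bilateral_term c (\<lambda>m. scale_weight p m * norm (?level m q)) n" for q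
      using scale_weight_nonneg[OF \<open>p < 0\<close>] unfolding F0_def bilateral_term_def
      by (auto intro!: order_trans[OF norm_triangle_ineq] simp: norm_mult)
    then have "integral\<^sup>L ?M (\<lambda>q. norm (F0 n q))
        \<le> integral\<^sup>L ?M (\<lambda>q. bilateral_term c (\<lambda>m. scale_weight p m * norm (?level m q)) n)"
      using int_F0 int_G by (intro integral_mono integrable_norm) (auto simp: bilateral_term_def)
    also have "\<dots> \<le> bilateral_term c (\<lambda>m. scale_weight p m * W m) n"
    proof -
      have "norm (?level m q) = indicator (same_cell_pairs m) q * norm (G q)" for m q
        by (simp add: indicator_def)
      then have "integrable ?M (\<lambda>q. indicator (same_cell_pairs m) q * norm (G q))" for m
        using integrable_norm[OF int_G] by simp
      then show ?thesis
        using bound scale_weight_nonneg[OF \<open>p < 0\<close>] \<open>\<And>m q. norm (?level m q) = _\<close>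
        by (auto simp: bilateral_term_def intro!: add_mono mult_left_mono)
    qed
    finally show ?thesis .
  qed
  finally have "summable (\<lambda>n. integral\<^sup>L ?M (\<lambda>q. norm (F n q)))"
    by (intro summable_comparison_test'[OF summable_W]) auto
  moreover have "(\<lambda>n. F n q) sums H q" and "summable (\<lambda>n. norm (F n q))" for q
    using offdiagonal_kernel_sums[OF \<open>p < 0\<close>, of q c "G q"] unfolding F_def F0_def H_def by auto
  ultimately have "integrable ?M (\<lambda>q. \<Sum>n. F n q)"
    and "(\<lambda>n. integral\<^sup>L ?M (F n)) sums (\<integral>q. (\<Sum>n. F n q) \<partial>?M)"
    using integrable_suminf[OF int_F] sums_integral[OF int_F] by auto
  moreover have "(\<lambda>q. \<Sum>n. F n q) = H"
    using \<open>\<And>q. (\<lambda>n. F n q) sums H q\<close> by (auto simp: sums_iff)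
  ultimately show "integrable ?M H"
    and "bilateral_term c (\<lambda>m. of_real (scale_weight p m) * integral\<^sup>L ?M (?level m))
      sums integral\<^sup>L ?M H"
    unfolding integral_F by auto
qed

lemma dyadic_dist_nonneg: "0 < x \<Longrightarrow> 0 < y \<Longrightarrow> 0 \<le> dyadic_dist x y"
  by (cases "x = y") (auto simp: dyadic_dist_self less_imp_le dyadic_dist_pos)

lemma form_Q_eq_kernel_integral:
  "form_Q s \<phi> = (\<integral>q. indicator posquad q * (of_real (dyadic_dist (fst q) (snd q) powr (2 * s - 1))
      * (\<phi> (fst q) * cnj (\<phi> (snd q)))) \<partial>(lborel \<Otimes>\<^sub>M lborel))"
  unfolding form_Q_def set_lebesgue_integral_def
proof (intro Bochner_Integration.integral_cong refl)
  fix q :: "real \<times> real"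
  have "dyadic_dist (fst q) (snd q) powr (2 * s - 1)
      = dyadic_dist (fst q) (snd q) powr (2 * s) / dyadic_dist (fst q) (snd q)"
    if "q \<in> posquad"
    using that dyadic_dist_nonneg[of "fst q" "snd q"] unfolding posquad_def
    by (auto simp: powr_diff powr_one)
  then show "indicator posquad q *\<^sub>R (of_real (dyadic_dist (fst q) (snd q) powr (2 * s))
        * \<phi> (fst q) * cnj (\<phi> (snd q)) / of_real (dyadic_dist (fst q) (snd q)))
      = indicator posquad q * (of_real (dyadic_dist (fst q) (snd q) powr (2 * s - 1))
        * (\<phi> (fst q) * cnj (\<phi> (snd q))))"
    by (cases "q \<in> posquad") (simp_all add: scaleR_conv_of_real)
qed

lemma energy_E_eq_kernel_integral:
  "complex_of_real (energy_E s \<phi>) = (\<integral>q. indicator posquad q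
      * (of_real (dyadic_dist (fst q) (snd q) powr (- (2 * s + 1)))
      * of_real ((cmod (\<phi> (fst q) - \<phi> (snd q)))\<^sup>2)) \<partial>(lborel \<Otimes>\<^sub>M lborel))"
  unfolding energy_E_def set_lebesgue_integral_def integral_complex_of_real[symmetric]
proof (intro Bochner_Integration.integral_cong refl)
  fix q :: "real \<times> real"
  have "d powr (- (2 * s + 1)) = 1 / (d powr (2 * s) * d)" if "0 \<le> d" for d :: real
    using powr_minus_divide[of d "2 * s + 1"] powr_add[of d "2 * s" 1] powr_one[OF that] by simp
  then have "dyadic_dist (fst q) (snd q) powr (- (2 * s + 1))
      = 1 / (dyadic_dist (fst q) (snd q) powr (2 * s) * dyadic_dist (fst q) (snd q))"
    if "q \<in> posquad"
    using that dyadic_dist_nonneg[of "fst q" "snd q"] unfolding posquad_def by auto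
  then show "complex_of_real (indicator posquad q *\<^sub>R ((cmod (\<phi> (fst q) - \<phi> (snd q)))\<^sup>2
        / dyadic_dist (fst q) (snd q) powr (2 * s) / dyadic_dist (fst q) (snd q)))
      = indicator posquad q * (of_real (dyadic_dist (fst q) (snd q) powr (- (2 * s + 1)))
        * of_real ((cmod (\<phi> (fst q) - \<phi> (snd q)))\<^sup>2))"
    by (cases "q \<in> posquad") (simp_all add: divide_inverse)
qed

lemma sums_complex_of_real_eq:
  assumes "(\<lambda>n. complex_of_real (f n)) sums z"
  shows "z = of_real (suminf f)"
proof -
  have "summable f" using sums_summable[OF assms] by simp
  then show ?thesis using sums_unique2[OF assms sums_of_real[OF summable_sums]] by simp
qed

locale dyadic_test_function =
  fixes \<phi> :: "real \<Rightarrow> complex" and B :: real and M m1 :: int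
  assumes measurable_\<phi>[measurable]: "\<phi> \<in> borel_measurable lborel"
    and bounded: "\<And>x. cmod (\<phi> x) \<le> B"
    and supported: "\<And>x. 2 powr M < x \<Longrightarrow> \<phi> x = 0"
    and mean_zero: "\<And>m. M \<le> m \<Longrightarrow> (\<integral>x. indicator (dyadic_cell m 0) x * \<phi> x \<partial>lborel) = 0"
    and locally_constant: "\<And>x y. 0 < x \<Longrightarrow> 0 < y \<Longrightarrow> same_cell m1 x y \<Longrightarrow> \<phi> x = \<phi> y"
    and fine_below_coarse: "m1 < M"
begin

definition cell_integral :: "int \<Rightarrow> nat \<Rightarrow> complex" where
  "cell_integral m k = (\<integral>x. indicator (dyadic_cell m k) x * \<phi> x \<partial>lborel)"

definition cell_sq_sum :: "int \<Rightarrow> real" where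
  "cell_sq_sum m = (\<Sum>k<cell_count (2 powr M) m. (cmod (cell_integral m k))\<^sup>2)"

definition sq_norm :: real where
  "sq_norm = (\<integral>x. indicator {0<..} x * (cmod (\<phi> x))\<^sup>2 \<partial>lborel)"

definition L1_norm :: real where
  "L1_norm = (\<integral>x. indicator {0<..} x * cmod (\<phi> x) \<partial>lborel)"

definition cell_abs_integral :: "int \<Rightarrow> nat \<Rightarrow> real" where
  "cell_abs_integral m k = (\<integral>x. indicator (dyadic_cell m k) x * cmod (\<phi> x) \<partial>lborel)"

lemma measurable_cnj_\<phi>[measurable]: "(\<lambda>x. cnj (\<phi> x)) \<in> borel_measurable lborel"
  using measurable_compose[OF measurable_\<phi> borel_measurable_continuous_onI[OF continuous_on_cnj]]
  by simp

lemma bounded_cnj: "cmod (cnj (\<phi> x)) \<le> B"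
  using bounded by simp

lemma integral_pos_eq_sum_cells:
  fixes f :: "complex \<Rightarrow> real"
  assumes [measurable]: "f \<in> borel_measurable borel" and "f 0 = 0" and "\<And>x. \<bar>f (\<phi> x)\<bar> \<le> C"
  shows "(\<integral>x. indicator {0<..} x * f (\<phi> x) \<partial>lborel)
    = (\<Sum>k<cell_count (2 powr M) m. \<integral>x. indicator (dyadic_cell m k) x * f (\<phi> x) \<partial>lborel)"
proof -
  have "(\<lambda>x. indicator {0<..} x * f (\<phi> x))
      = (\<lambda>x. \<Sum>k<cell_count (2 powr M) m. indicator (dyadic_cell m k) x * f (\<phi> x))"
    using assms(2) supported by (intro ext indicator_pos_eq_sum_cells) simp
  moreover have "integrable lborel (\<lambda>x. indicator (dyadic_cell m k) x * f (\<phi> x))" for k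
    using assms(3) by (intro integrable_dyadic_cell) auto
  ultimately show ?thesis by (simp only:) (rule Bochner_Integration.integral_sum)
qed

lemma sq_norm_eq_sum_cells:
  "sq_norm = (\<Sum>k<cell_count (2 powr M) m. \<integral>x. indicator (dyadic_cell m k) x * (cmod (\<phi> x))\<^sup>2 \<partial>lborel)"
  unfolding sq_norm_def using bounded
  by (intro integral_pos_eq_sum_cells[where C = "B\<^sup>2"]) (auto intro: power_mono)

lemma L1_norm_eq_sum_cells: "L1_norm = (\<Sum>k<cell_count (2 powr M) m. cell_abs_integral m k)"
  unfolding L1_norm_def cell_abs_integral_def using bounded
  by (intro integral_pos_eq_sum_cells[where C = B]) auto

lemma integral_cnj_cell:
  "(\<integral>x. indicator (dyadic_cell m k) x * cnj (\<phi> x) \<partial>lborel) = cnj (cell_integral m k)"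
proof -
  have "(\<lambda>x. indicator (dyadic_cell m k) x * cnj (\<phi> x))
      = (\<lambda>x. cnj (indicator (dyadic_cell m k) x * \<phi> x))"
    by (auto simp: indicator_def)
  then show ?thesis unfolding cell_integral_def by (simp only:) (rule Bochner_Integration.integral_cnj)
qed

lemma integral_same_cell_pairs_\<phi>:
  "integrable (lborel \<Otimes>\<^sub>M lborel)
    (\<lambda>q. indicator (same_cell_pairs m) q * (\<phi> (fst q) * cnj (\<phi> (snd q))))"
  "integrable (lborel \<Otimes>\<^sub>M lborel)
    (\<lambda>q. indicator (same_cell_pairs m) q * (cnj (\<phi> (fst q)) * \<phi> (snd q)))"
  "(\<integral>q. indicator (same_cell_pairs m) q * (\<phi> (fst q) * cnj (\<phi> (snd q))) \<partial>(lborel \<Otimes>\<^sub>M lborel))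
    = of_real (cell_sq_sum m)"
  "(\<integral>q. indicator (same_cell_pairs m) q * (cnj (\<phi> (fst q)) * \<phi> (snd q)) \<partial>(lborel \<Otimes>\<^sub>M lborel))
    = of_real (cell_sq_sum m)"
proof -
  have \<phi>_cnj: "\<phi> x * cnj (\<phi> y) = 0" and cnj_\<phi>: "cnj (\<phi> x) * \<phi> y = 0"
    if "2 powr M < x" "2 powr M < y" for x y
    using supported[OF that(1)] by simp_all
  note P = integral_same_cell_pairs_product[OF measurable_\<phi> measurable_cnj_\<phi> bounded bounded_cnj \<phi>_cnj,
      where m = m]
    and P' = integral_same_cell_pairs_product[OF measurable_cnj_\<phi> measurable_\<phi> bounded_cnj bounded cnj_\<phi>,
      where m = m]
  have sum_eq: "(\<Sum>k<cell_count (2 powr M) m. cell_integral m k * cnj (cell_integral m k))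
      = of_real (cell_sq_sum m)"
    unfolding cell_sq_sum_def of_real_sum complex_norm_square ..
  show "integrable (lborel \<Otimes>\<^sub>M lborel)
      (\<lambda>q. indicator (same_cell_pairs m) q * (\<phi> (fst q) * cnj (\<phi> (snd q))))"
    and "integrable (lborel \<Otimes>\<^sub>M lborel)
      (\<lambda>q. indicator (same_cell_pairs m) q * (cnj (\<phi> (fst q)) * \<phi> (snd q)))"
    using P(1) P'(1) by auto
  show "(\<integral>q. indicator (same_cell_pairs m) q * (\<phi> (fst q) * cnj (\<phi> (snd q))) \<partial>(lborel \<Otimes>\<^sub>M lborel))
      = of_real (cell_sq_sum m)"
    using P(2) unfolding integral_cnj_cell cell_integral_def[symmetric] sum_eq[symmetric] .
  show "(\<integral>q. indicator (same_cell_pairs m) q * (cnj (\<phi> (fst q)) * \<phi> (snd q)) \<partial>(lborel \<Otimes>\<^sub>M lborel))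
      = of_real (cell_sq_sum m)"
    using P'(2) unfolding integral_cnj_cell cell_integral_def[symmetric] sum_eq[symmetric]
    by (simp only: mult.commute)
qed

lemma integral_same_cell_pairs_norm_sq:
  "integrable (lborel \<Otimes>\<^sub>M lborel)
    (\<lambda>q. indicator (same_cell_pairs m) q * (complex_of_real ((cmod (\<phi> (fst q)))\<^sup>2) * 1))"
  "integrable (lborel \<Otimes>\<^sub>M lborel)
    (\<lambda>q. indicator (same_cell_pairs m) q * (1 * complex_of_real ((cmod (\<phi> (snd q)))\<^sup>2)))"
  "(\<integral>q. indicator (same_cell_pairs m) q * (complex_of_real ((cmod (\<phi> (fst q)))\<^sup>2) * 1)
    \<partial>(lborel \<Otimes>\<^sub>M lborel)) = of_real (2 powr m * sq_norm)"
  "(\<integral>q. indicator (same_cell_pairs m) q * (1 * complex_of_real ((cmod (\<phi> (snd q)))\<^sup>2))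
    \<partial>(lborel \<Otimes>\<^sub>M lborel)) = of_real (2 powr m * sq_norm)"
proof -
  define sq where "sq x = complex_of_real ((cmod (\<phi> x))\<^sup>2)" for x
  have measurable_sq: "sq \<in> borel_measurable lborel"
    unfolding sq_def by measurable
  have measurable_one: "(\<lambda>x. 1 :: complex) \<in> borel_measurable lborel"
    by simp
  have sq_bound: "norm (sq x) \<le> B\<^sup>2" for x
    unfolding sq_def using power_mono[OF bounded[of x] norm_ge_zero] by (simp add: norm_power)
  have one_bound: "norm (1 :: complex) \<le> 1" by simp
  have sq_1: "sq x * 1 = 0" and sq_2: "1 * sq y = 0" if "2 powr M < x" "2 powr M < y" for x y
    using supported[OF that(1)] supported[OF that(2)] by (simp_all add: sq_def)
  note P = integral_same_cell_pairs_product[OF measurable_sq measurable_one sq_bound one_bound sq_1,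
      where m = m]
    and P' = integral_same_cell_pairs_product[OF measurable_one measurable_sq one_bound sq_bound sq_2,
      where m = m]
  have "(\<integral>x. indicator (dyadic_cell m k) x * sq x \<partial>lborel)
      = of_real (\<integral>x. indicator (dyadic_cell m k) x * (cmod (\<phi> x))\<^sup>2 \<partial>lborel)" for k
  proof -
    have "(\<lambda>x. indicator (dyadic_cell m k) x * sq x)
        = (\<lambda>x. complex_of_real (indicator (dyadic_cell m k) x * (cmod (\<phi> x))\<^sup>2))"
      unfolding sq_def by (auto simp: indicator_def)
    then show ?thesis by (simp only:) (rule integral_complex_of_real)
  qed
  then have "(\<Sum>k<cell_count (2 powr M) m. (\<integral>x. indicator (dyadic_cell m k) x * sq x \<partial>lborel)
      * (\<integral>x. indicator (dyadic_cell m k) x * 1 \<partial>lborel)) = of_real (2 powr m * sq_norm)"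
    unfolding integral_dyadic_cell_const sq_norm_eq_sum_cells[of m]
    by (simp add: sum_distrib_left mult.commute)
  then show "integrable (lborel \<Otimes>\<^sub>M lborel)
      (\<lambda>q. indicator (same_cell_pairs m) q * (complex_of_real ((cmod (\<phi> (fst q)))\<^sup>2) * 1))"
    "integrable (lborel \<Otimes>\<^sub>M lborel)
      (\<lambda>q. indicator (same_cell_pairs m) q * (1 * complex_of_real ((cmod (\<phi> (snd q)))\<^sup>2)))"
    "(\<integral>q. indicator (same_cell_pairs m) q * (complex_of_real ((cmod (\<phi> (fst q)))\<^sup>2) * 1)
      \<partial>(lborel \<Otimes>\<^sub>M lborel)) = of_real (2 powr m * sq_norm)"
    "(\<integral>q. indicator (same_cell_pairs m) q * (1 * complex_of_real ((cmod (\<phi> (snd q)))\<^sup>2))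
      \<partial>(lborel \<Otimes>\<^sub>M lborel)) = of_real (2 powr m * sq_norm)"
    using P P' unfolding sq_def by (simp_all add: mult.commute)
qed

lemma integral_same_cell_pairs_diff_sq:
  "integrable (lborel \<Otimes>\<^sub>M lborel)
    (\<lambda>q. indicator (same_cell_pairs m) q * complex_of_real ((cmod (\<phi> (fst q) - \<phi> (snd q)))\<^sup>2))"
  "(\<integral>q. indicator (same_cell_pairs m) q * complex_of_real ((cmod (\<phi> (fst q) - \<phi> (snd q)))\<^sup>2)
      \<partial>(lborel \<Otimes>\<^sub>M lborel)) = of_real (2 * 2 powr m * sq_norm - 2 * cell_sq_sum m)"
proof -
  have expand: "indicator (same_cell_pairs m) q * complex_of_real ((cmod (\<phi> (fst q) - \<phi> (snd q)))\<^sup>2)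
      = indicator (same_cell_pairs m) q * (complex_of_real ((cmod (\<phi> (fst q)))\<^sup>2) * 1)
      + indicator (same_cell_pairs m) q * (1 * complex_of_real ((cmod (\<phi> (snd q)))\<^sup>2))
      - indicator (same_cell_pairs m) q * (\<phi> (fst q) * cnj (\<phi> (snd q)))
      - indicator (same_cell_pairs m) q * (cnj (\<phi> (fst q)) * \<phi> (snd q))" for q
    unfolding complex_norm_square by (simp add: algebra_simps)
  show "integrable (lborel \<Otimes>\<^sub>M lborel)
    (\<lambda>q. indicator (same_cell_pairs m) q * complex_of_real ((cmod (\<phi> (fst q) - \<phi> (snd q)))\<^sup>2))"
    unfolding expand using integral_same_cell_pairs_norm_sq integral_same_cell_pairs_\<phi> by simp
  show "(\<integral>q. indicator (same_cell_pairs m) q * complex_of_real ((cmod (\<phi> (fst q) - \<phi> (snd q)))\<^sup>2)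
      \<partial>(lborel \<Otimes>\<^sub>M lborel)) = of_real (2 * 2 powr m * sq_norm - 2 * cell_sq_sum m)"
    unfolding expand using integral_same_cell_pairs_norm_sq integral_same_cell_pairs_\<phi>
    by (simp add: Bochner_Integration.integral_diff Bochner_Integration.integral_add)
qed

lemma cell_count_coarse: "M \<le> m \<Longrightarrow> cell_count (2 powr M) m = 1"
proof -
  assume "M \<le> m"
  then have "0 < 2 powr M / 2 powr m" "2 powr M / 2 powr m \<le> 1" by simp_all
  then have "\<lceil>2 powr M / 2 powr m\<rceil> = 1" by (simp add: ceiling_eq_iff)
  then show ?thesis unfolding cell_count_def by simp
qed

lemma cell_sq_sum_coarse: "M \<le> m \<Longrightarrow> cell_sq_sum m = 0"
  unfolding cell_sq_sum_def cell_integral_def by (simp add: cell_count_coarse mean_zero)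

lemma cell_sq_sum_fine:
  assumes "m \<le> m1"
  shows "cell_sq_sum m = 2 powr m * sq_norm"
proof -
  have "(cmod (cell_integral m k))\<^sup>2
      = 2 powr m * (\<integral>x. indicator (dyadic_cell m k) x * (cmod (\<phi> x))\<^sup>2 \<partial>lborel)"
    for k
  proof -
    define x0 where "x0 = (real k + 1) * 2 powr m"
    have "x0 \<in> dyadic_cell m k" unfolding x0_def dyadic_cell_def by simp
    have const: "\<phi> x = \<phi> x0" if "x \<in> dyadic_cell m k" for x
    proof (rule locally_constant)
      show "0 < x" "0 < x0" using that \<open>x0 \<in> dyadic_cell m k\<close> by (auto dest: dyadic_cell_pos)
      have "same_cell m x x0"
        using that \<open>x0 \<in> dyadic_cell m k\<close> by (simp add: same_cell_def mem_dyadic_cell_iff)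
      then show "same_cell m1 x x0" using assms by (rule same_cell_mono)
    qed
    then have eq_\<phi>: "(\<lambda>x. indicator (dyadic_cell m k) x * \<phi> x)
        = (\<lambda>x. indicator (dyadic_cell m k) x * \<phi> x0)"
      and eq_sq: "(\<lambda>x. indicator (dyadic_cell m k) x * (cmod (\<phi> x))\<^sup>2)
        = (\<lambda>x. indicator (dyadic_cell m k) x * (cmod (\<phi> x0))\<^sup>2)"
      by (auto simp: indicator_def)
    show ?thesis
      unfolding cell_integral_def eq_\<phi> eq_sq integral_dyadic_cell_const
      by (simp add: norm_mult power2_eq_square)
  qed
  then show ?thesis unfolding cell_sq_sum_def sq_norm_eq_sum_cells[of m] by (simp add: sum_distrib_left)
qed

lemma cell_integral_beyond_count:
  assumes "cell_count (2 powr M) m \<le> k"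
  shows "cell_integral m k = 0"
proof -
  have "(\<lambda>x. indicator (dyadic_cell m k) x * \<phi> x) = (\<lambda>x. 0)"
    using dyadic_cell_beyond_count[OF assms] supported by (auto simp: indicator_def)
  then show ?thesis unfolding cell_integral_def by simp
qed

lemma cell_integral_split:
  "cell_integral m k = cell_integral (m - 1) (2 * k) + cell_integral (m - 1) (2 * k + 1)"
proof -
  have "(\<lambda>x. indicator (dyadic_cell m k) x * \<phi> x) = (\<lambda>x. indicator (dyadic_cell (m - 1) (2 * k)) x * \<phi> x
      + indicator (dyadic_cell (m - 1) (2 * k + 1)) x * \<phi> x)"
    by (simp add: indicator_dyadic_cell_split[of m k] distrib_right)
  then show ?thesis unfolding cell_integral_def
    by (simp add: Bochner_Integration.integral_add integrable_dyadic_cell[OF measurable_\<phi> bounded])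
qed

lemma cell_sq_sum_le_double: "cell_sq_sum m \<le> 2 * cell_sq_sum (m - 1)"
proof -
  have "cell_sq_sum (m - 1) = (\<Sum>j<2 * cell_count (2 powr M) m. (cmod (cell_integral (m - 1) j))\<^sup>2)"
    using cell_count_pred_le[of "2 powr M" m] unfolding cell_sq_sum_def
    by (intro sum.mono_neutral_left) (auto simp: cell_integral_beyond_count)
  also have "\<dots> = (\<Sum>k<cell_count (2 powr M) m.
      (cmod (cell_integral (m - 1) (2 * k)))\<^sup>2 + (cmod (cell_integral (m - 1) (2 * k + 1)))\<^sup>2)"
  proof -
    have "(\<Sum>j<2 * K. f j) = (\<Sum>k<K. f (2 * k) + f (2 * k + 1))" for K and f :: "nat \<Rightarrow> real"
      by (induction K) (simp_all add: algebra_simps)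
    then show ?thesis .
  qed
  finally have coarse: "cell_sq_sum (m - 1) = \<dots>" .
  have sq_add: "(cmod (u + v))\<^sup>2 \<le> 2 * (cmod u)\<^sup>2 + 2 * (cmod v)\<^sup>2" for u v :: complex
  proof -
    have "(cmod (u + v))\<^sup>2 \<le> (cmod u + cmod v)\<^sup>2" by (intro power_mono norm_triangle_ineq) auto
    then show ?thesis by (smt (verit) sum_squares_bound power2_sum)
  qed
  show ?thesis
    unfolding coarse unfolding cell_sq_sum_def cell_integral_split[of m] sum_distrib_left
    by (intro sum_mono order_trans[OF sq_add]) (simp add: algebra_simps)
qed

lemma cell_abs_integral_nonneg: "0 \<le> cell_abs_integral m k"
  unfolding cell_abs_integral_def by (rule Bochner_Integration.integral_nonneg) (simp add: indicator_def)

lemma cell_abs_integral_le: "cell_abs_integral m k \<le> B * 2 powr m"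
proof -
  have "cell_abs_integral m k \<le> (\<integral>x. indicator (dyadic_cell m k) x * B \<partial>lborel)"
    unfolding cell_abs_integral_def using bounded order_trans[OF norm_ge_zero bounded]
    by (intro integral_mono integrable_dyadic_cell[where B = B])
      (auto simp: indicator_def intro: integrable_dyadic_cell[where B = "\<bar>B\<bar>"])
  then show ?thesis by (simp add: measure_dyadic_cell mult.commute)
qed

lemma integral_same_cell_pairs_norm:
  "(\<integral>q. indicator (same_cell_pairs m) q * norm (\<phi> (fst q) * cnj (\<phi> (snd q))) \<partial>(lborel \<Otimes>\<^sub>M lborel))
    = (\<Sum>k<cell_count (2 powr M) m. (cell_abs_integral m k)\<^sup>2)"
proof -
  define abs\<phi> where "abs\<phi> x = complex_of_real (cmod (\<phi> x))" for x
  have measurable_abs\<phi>: "abs\<phi> \<in> borel_measurable lborel" unfolding abs\<phi>_def by measurable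
  have bounded_abs\<phi>: "norm (abs\<phi> x) \<le> B" for x unfolding abs\<phi>_def using bounded by simp
  have abs\<phi>_vanishes: "abs\<phi> x * abs\<phi> y = 0" if "2 powr M < x" "2 powr M < y" for x y
    using supported[OF that(1)] by (simp add: abs\<phi>_def)
  have cell_abs\<phi>: "(\<integral>x. indicator (dyadic_cell m k) x * abs\<phi> x \<partial>lborel)
      = of_real (cell_abs_integral m k)" for k
  proof -
    have "(\<lambda>x. indicator (dyadic_cell m k) x * abs\<phi> x)
        = (\<lambda>x. complex_of_real (indicator (dyadic_cell m k) x * cmod (\<phi> x)))"
      unfolding abs\<phi>_def by (auto simp: indicator_def)
    then show ?thesis unfolding cell_abs_integral_def by (simp only:) (rule integral_complex_of_real)
  qed
  have pointwise: "(\<lambda>q. complex_of_real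
        (indicator (same_cell_pairs m) q * norm (\<phi> (fst q) * cnj (\<phi> (snd q)))))
      = (\<lambda>q. indicator (same_cell_pairs m) q * (abs\<phi> (fst q) * abs\<phi> (snd q)))"
    unfolding abs\<phi>_def by (auto simp: indicator_def norm_mult)
  have "complex_of_real (\<integral>q. indicator (same_cell_pairs m) q * norm (\<phi> (fst q) * cnj (\<phi> (snd q)))
      \<partial>(lborel \<Otimes>\<^sub>M lborel))
      = (\<integral>q. complex_of_real (indicator (same_cell_pairs m) q * norm (\<phi> (fst q) * cnj (\<phi> (snd q))))
        \<partial>(lborel \<Otimes>\<^sub>M lborel))"
    by (rule integral_complex_of_real[symmetric])
  also have "\<dots> = (\<Sum>k<cell_count (2 powr M) m. (\<integral>x. indicator (dyadic_cell m k) x * abs\<phi> x \<partial>lborel)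
      * (\<integral>y. indicator (dyadic_cell m k) y * abs\<phi> y \<partial>lborel))"
    unfolding pointwise by (rule integral_same_cell_pairs_product(2)[OF measurable_abs\<phi> measurable_abs\<phi>
        bounded_abs\<phi> bounded_abs\<phi> abs\<phi>_vanishes])
  also have "\<dots> = of_real (\<Sum>k<cell_count (2 powr M) m. (cell_abs_integral m k)\<^sup>2)"
    unfolding cell_abs\<phi> by (simp add: power2_eq_square)
  finally show ?thesis by (simp only: of_real_eq_iff)
qed

definition level_norm_bound :: "int \<Rightarrow> real" where
  "level_norm_bound m = (if M \<le> m then L1_norm\<^sup>2 else B * 2 powr m * L1_norm)"

lemma integral_same_cell_pairs_norm_le:
  "(\<integral>q. indicator (same_cell_pairs m) q * norm (\<phi> (fst q) * cnj (\<phi> (snd q))) \<partial>(lborel \<Otimes>\<^sub>M lborel))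
    \<le> level_norm_bound m"
proof (cases "M \<le> m")
  case True
  then show ?thesis
    unfolding integral_same_cell_pairs_norm L1_norm_eq_sum_cells[of m] level_norm_bound_def
    by (simp add: cell_count_coarse)
next
  case False
  have "(\<Sum>k<cell_count (2 powr M) m. (cell_abs_integral m k)\<^sup>2)
      \<le> (\<Sum>k<cell_count (2 powr M) m. B * 2 powr m * cell_abs_integral m k)"
    using cell_abs_integral_le cell_abs_integral_nonneg
    by (intro sum_mono) (simp add: power2_eq_square mult_right_mono)
  then show ?thesis
    unfolding integral_same_cell_pairs_norm L1_norm_eq_sum_cells[of m] level_norm_bound_def
    using False by (simp add: sum_distrib_left)
qed

lemma summable_level_norm_bound:
  assumes "0 < s" "s < 1/2"
  shows "summable (bilateral_term M (\<lambda>m. scale_weight (2 * s - 1) m * level_norm_bound m))"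
proof -
  define C1 where "C1 = (1 - 2 powr (2 * s - 1)) * L1_norm\<^sup>2"
  define C2 where "C2 = (1 - 2 powr (2 * s - 1)) * B * L1_norm"
  have "scale_weight (2 * s - 1) m * level_norm_bound m
      = C1 * (of_bool (M \<le> m) * 2 powr (- (1 - 2 * s) * m))
        + C2 * (of_bool (m \<le> M - 1) * 2 powr (2 * s * m))" for m
    unfolding level_norm_bound_def C1_def C2_def
    by (auto simp: scale_weight_def powr_add[symmetric] algebra_simps)
  then have "bilateral_term M (\<lambda>m. scale_weight (2 * s - 1) m * level_norm_bound m)
      = (\<lambda>n. C1 * bilateral_term M (\<lambda>m. of_bool (M \<le> m) * 2 powr (- (1 - 2 * s) * m)) n
        + C2 * bilateral_term M (\<lambda>m. of_bool (m \<le> M - 1) * 2 powr (2 * s * m)) n)"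
    unfolding bilateral_term_def by (simp add: algebra_simps)
  moreover have "summable \<dots>"
    using assms
    by (intro summable_add summable_mult sums_summable[OF bilateral_sums_powr_above]
        sums_summable[OF bilateral_sums_powr_below]) auto
  ultimately show ?thesis by simp
qed

lemma integral_same_cell_pairs_norm_diff_sq:
  "(\<integral>q. indicator (same_cell_pairs m) q * norm (complex_of_real ((cmod (\<phi> (fst q) - \<phi> (snd q)))\<^sup>2))
      \<partial>(lborel \<Otimes>\<^sub>M lborel))
    = 2 * 2 powr m * sq_norm - 2 * cell_sq_sum m"
proof -
  have pointwise: "(\<lambda>q. complex_of_real (indicator (same_cell_pairs m) q
        * norm (complex_of_real ((cmod (\<phi> (fst q) - \<phi> (snd q)))\<^sup>2))))
      = (\<lambda>q. indicator (same_cell_pairs m) q * complex_of_real ((cmod (\<phi> (fst q) - \<phi> (snd q)))\<^sup>2))"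
    by (auto simp: indicator_def simp del: of_real_power)
  have "complex_of_real (\<integral>q. indicator (same_cell_pairs m) q
        * norm (complex_of_real ((cmod (\<phi> (fst q) - \<phi> (snd q)))\<^sup>2)) \<partial>(lborel \<Otimes>\<^sub>M lborel))
      = (\<integral>q. complex_of_real (indicator (same_cell_pairs m) q
        * norm (complex_of_real ((cmod (\<phi> (fst q) - \<phi> (snd q)))\<^sup>2))) \<partial>(lborel \<Otimes>\<^sub>M lborel))"
    by (rule integral_complex_of_real[symmetric])
  also have "\<dots> = of_real (2 * 2 powr m * sq_norm - 2 * cell_sq_sum m)"
    unfolding pointwise by (rule integral_same_cell_pairs_diff_sq(2))
  finally show ?thesis by (simp only: of_real_eq_iff)
qed

lemma sq_norm_nonneg: "0 \<le> sq_norm"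
  unfolding sq_norm_def by (rule Bochner_Integration.integral_nonneg) (simp add: indicator_def)

lemma sums_form_Q:
  assumes "0 < s" "s < 1/2"
  shows "(\<lambda>n. complex_of_real (bilateral_term M (\<lambda>m. scale_weight (2 * s - 1) m * cell_sq_sum m) n))
    sums form_Q s \<phi>"
proof -
  have [measurable]: "(\<lambda>q. \<phi> (fst q) * cnj (\<phi> (snd q))) \<in> borel_measurable (lborel \<Otimes>\<^sub>M lborel)"
    by measurable
  have "2 * s - 1 < 0" using assms by simp
  have of_real: "bilateral_term M
        (\<lambda>m. complex_of_real (scale_weight (2 * s - 1) m) * of_real (cell_sq_sum m))
      = (\<lambda>n. of_real (bilateral_term M (\<lambda>m. scale_weight (2 * s - 1) m * cell_sq_sum m) n))"
    by (simp add: fun_eq_iff bilateral_term_def)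
  show ?thesis
    using dyadic_kernel_integral(2)[OF _ \<open>2 * s - 1 < 0\<close> integral_same_cell_pairs_\<phi>(1)
        integral_same_cell_pairs_norm_le summable_level_norm_bound[OF assms]]
    unfolding form_Q_eq_kernel_integral integral_same_cell_pairs_\<phi>(3) of_real by simp
qed

lemma sums_energy_E:
  assumes "0 < s" and summable: "summable (bilateral_term (m1 + 1)
    (\<lambda>m. scale_weight (- (2 * s + 1)) m * (2 * 2 powr m * sq_norm - 2 * cell_sq_sum m)))"
  shows "(\<lambda>n. complex_of_real (bilateral_term (m1 + 1)
      (\<lambda>m. scale_weight (- (2 * s + 1)) m * (2 * 2 powr m * sq_norm - 2 * cell_sq_sum m)) n))
    sums complex_of_real (energy_E s \<phi>)"
proof -
  have [measurable]: "(\<lambda>q. complex_of_real ((cmod (\<phi> (fst q) - \<phi> (snd q)))\<^sup>2))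
      \<in> borel_measurable (lborel \<Otimes>\<^sub>M lborel)"
    by measurable
  have "- (2 * s + 1) < 0" using assms by simp
  have of_real: "bilateral_term (m1 + 1) (\<lambda>m. complex_of_real (scale_weight (- (2 * s + 1)) m)
        * of_real (2 * 2 powr m * sq_norm - 2 * cell_sq_sum m))
      = (\<lambda>n. of_real (bilateral_term (m1 + 1)
        (\<lambda>m. scale_weight (- (2 * s + 1)) m * (2 * 2 powr m * sq_norm - 2 * cell_sq_sum m)) n))"
    by (simp add: fun_eq_iff bilateral_term_def)
  show ?thesis
    using dyadic_kernel_integral(2)[OF _ \<open>- (2 * s + 1) < 0\<close> integral_same_cell_pairs_diff_sq(1)
        integral_same_cell_pairs_norm_diff_sq[THEN eq_refl] summable]
    unfolding energy_E_eq_kernel_integral integral_same_cell_pairs_diff_sq(2) of_real by simp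
qed

theorem uncertainty_inequality:
  assumes "0 < s" "s < 1/2"
  shows "complex_of_real (dgamma s * L2_norm_pos \<phi> ^ 4) \<le> form_Q s \<phi> * complex_of_real (energy_E s \<phi>)"
proof -
  define u where "u m = cell_sq_sum m / 2 powr m" for m
  have cell_sq_sum_eq: "cell_sq_sum m = 2 powr m * u m" for m
    unfolding u_def by simp
  have fine: "u m = sq_norm" if "m \<le> m1" for m
    unfolding u_def using cell_sq_sum_fine[OF that] by simp
  have coarse: "u m = 0" if "M \<le> m" for m
    unfolding u_def using cell_sq_sum_coarse[OF that] by simp
  have antitone: "u m \<le> u (m - 1)" for m
    using cell_sq_sum_le_double[of m] unfolding u_def by (simp add: powr_diff field_simps)
  note bound = bilateral_series_product_lower_bound[where u = u and N = sq_norm,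
      OF assms fine coarse antitone fine_below_coarse]
  have energy_weight: "2 * 2 powr m * sq_norm - 2 * cell_sq_sum m = 2 * 2 powr m * (sq_norm - u m)" for m
    unfolding cell_sq_sum_eq by (simp add: algebra_simps)
  have "form_Q s \<phi>
      = of_real (\<Sum>n. bilateral_term M (\<lambda>m. scale_weight (2 * s - 1) m * (2 powr m * u m)) n)"
    using sums_form_Q[OF assms] unfolding cell_sq_sum_eq by (rule sums_complex_of_real_eq)
  moreover have "complex_of_real (energy_E s \<phi>) = of_real (\<Sum>n. bilateral_term (m1 + 1)
      (\<lambda>m. scale_weight (- (2 * s + 1)) m * (2 * 2 powr m * (sq_norm - u m))) n)"
    using sums_energy_E[OF assms(1), unfolded energy_weight, OF bound(1)]
    by (rule sums_complex_of_real_eq)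
  moreover have "L2_norm_pos \<phi> ^ 4 = sq_norm\<^sup>2"
  proof -
    have "L2_norm_pos \<phi> = sqrt sq_norm"
      unfolding L2_norm_pos_def set_lebesgue_integral_def sq_norm_def by simp
    moreover have "(sqrt sq_norm) ^ 4 = ((sqrt sq_norm)\<^sup>2)\<^sup>2" by (simp flip: power_mult)
    ultimately show ?thesis using sq_norm_nonneg by simp
  qed
  ultimately show ?thesis
    using bound(2) by (simp add: less_eq_complex_def)
qed

end

lemma haar_eq_dyadic_index:
  "haar j k x = 2 powr (j / 2) * (if dyadic_index (- j - 1) x - 2 * int k = 1 then 1
    else if dyadic_index (- j - 1) x - 2 * int k = 2 then -1 else 0)"
proof -
  have "x / 2 powr real_of_int (- j - 1) = 2 * (2 powr j * x)"
    by (simp add: powr_diff powr_minus_divide field_simps)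
  then have "2 * (2 powr j * x - real k) = x / 2 powr real_of_int (- j - 1) - of_int (2 * int k)"
    by simp
  then have "\<lceil>2 * (2 powr j * x - real k)\<rceil> = dyadic_index (- j - 1) x - 2 * int k"
    unfolding dyadic_index_def by (simp only: ceiling_diff_of_int)
  moreover have "haar_mother t = (if \<lceil>2 * t\<rceil> = 1 then 1 else if \<lceil>2 * t\<rceil> = 2 then -1 else 0)" for t
    unfolding haar_mother_def indicator_def by (auto simp: ceiling_eq_iff)
  ultimately show ?thesis unfolding haar_def by simp
qed

lemma haar_same_cell: "same_cell (- j - 1) x y \<Longrightarrow> haar j k x = haar j k y"
  unfolding haar_eq_dyadic_index same_cell_def by simp

lemma abs_haar_le: "\<bar>haar j k x\<bar> \<le> 2 powr (j / 2)"
  unfolding haar_def haar_mother_def by (auto simp: indicator_def)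

lemma haar_eq_0_outside:
  assumes "x \<le> 0 \<or> (real k + 1) * 2 powr (- j) < x"
  shows "haar j k x = 0"
proof -
  from assms consider "x \<le> 0" | "(real k + 1) * 2 powr (- real_of_int j) < x" by blast
  then have "2 powr j * x - real k \<le> 0 \<or> 1 < 2 powr j * x - real k"
  proof cases
    case 1
    then have "2 powr j * x \<le> 0" by (simp add: mult_nonneg_nonpos)
    then show ?thesis by simp
  next
    case 2
    then have "real k + 1 < 2 powr j * x" by (simp add: powr_minus_divide field_simps)
    then show ?thesis by simp
  qed
  then show ?thesis unfolding haar_def haar_mother_def by (auto simp: indicator_def)
qed

lemma measurable_haar[measurable]: "haar j k \<in> borel_measurable lborel"
  unfolding haar_def haar_mother_def by measurable

lemma haar_eq_indicators:
  "haar j k x = 2 powr (j / 2) *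
    (indicator {real k * 2 powr (- j) <.. (real k + 1/2) * 2 powr (- j)} x
    - indicator {(real k + 1/2) * 2 powr (- j) <.. (real k + 1) * 2 powr (- j)} x)"
proof -
  have "0 < 2 powr real_of_int j" by simp
  then show ?thesis
    unfolding haar_def haar_mother_def by (simp add: indicator_def powr_minus_divide field_simps)
qed

lemma integrable_haar: "integrable lborel (haar j k)"
  unfolding haar_eq_indicators[abs_def]
  by (intro integrable_mult_right Bochner_Integration.integrable_diff integrable_real_indicator) auto

lemma integral_haar: "integral\<^sup>L lborel (haar j k) = 0"
  unfolding haar_eq_indicators[abs_def]
  by (subst integral_mult_right_zero, subst Bochner_Integration.integral_diff)
    (auto intro!: integrable_real_indicator simp: measure_def algebra_simps)

lemma haar_support_le_powr: "(real k + 1) * 2 powr (- j) \<le> 2 powr (int k + \<bar>j\<bar>)"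
proof -
  have "k + 1 \<le> 2 ^ k" using Suc_leI[OF less_exp[of k]] by simp
  then have "real (k + 1) \<le> real (2 ^ k)" by (rule of_nat_mono)
  then have "real k + 1 \<le> 2 powr real k" by (simp add: powr_realpow)
  moreover have "2 powr (- j) \<le> 2 powr \<bar>j\<bar>" by simp
  ultimately have "(real k + 1) * 2 powr (- j) \<le> 2 powr real k * 2 powr \<bar>j\<bar>"
    by (intro mult_mono) auto
  then show ?thesis by (simp add: powr_add)
qed

lemma haar_eq_0_outside_cell0:
  assumes "(real k + 1) * 2 powr (- real_of_int j) \<le> 2 powr m" and "x \<notin> dyadic_cell m 0"
  shows "haar j k x = 0"
proof (rule haar_eq_0_outside)
  have "x \<le> 0 \<or> 2 powr m < x" using assms(2) unfolding dyadic_cell_def by auto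
  then show "x \<le> 0 \<or> (real k + 1) * 2 powr (- real_of_int j) < x" using assms(1) by linarith
qed

lemma haar_span_test_function:
  assumes "\<phi> \<in> haar_span"
  obtains B M m1 where "dyadic_test_function \<phi> B M m1"
proof -
  from assms obtain F c where "finite F"
    and \<phi>: "\<phi> = (\<lambda>x. \<Sum>p\<in>F. c p * complex_of_real (haar (fst p) (snd p) x))"
    unfolding haar_span_def by (auto simp: case_prod_beta)
  define M where "M = (\<Sum>p\<in>F. int (snd p) + \<bar>fst p\<bar>) + 1"
  define m1 where "m1 = - (\<Sum>p\<in>F. \<bar>fst p\<bar>) - 1"
  define B where "B = (\<Sum>p\<in>F. cmod (c p) * 2 powr (real_of_int (fst p) / 2))"
  have support: "(real (snd p) + 1) * 2 powr (- real_of_int (fst p)) \<le> 2 powr M" if "p \<in> F" for p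
  proof -
    have "int (snd p) + \<bar>fst p\<bar> \<le> M"
      unfolding M_def using that \<open>finite F\<close> member_le_sum[of p F "\<lambda>p. int (snd p) + \<bar>fst p\<bar>"] by auto
    then have "2 powr (int (snd p) + \<bar>fst p\<bar>) \<le> 2 powr M" by simp
    with haar_support_le_powr show ?thesis by (rule order_trans)
  qed
  have "dyadic_test_function \<phi> B M m1"
  proof
    show "\<phi> \<in> borel_measurable lborel" unfolding \<phi> by measurable
  next
    fix x
    have "cmod (\<phi> x) \<le> (\<Sum>p\<in>F. cmod (c p * complex_of_real (haar (fst p) (snd p) x)))"
      unfolding \<phi> by (rule norm_sum)
    also have "\<dots> \<le> B"
      unfolding B_def by (intro sum_mono) (auto simp: norm_mult intro!: mult_left_mono abs_haar_le)
    finally show "cmod (\<phi> x) \<le> B" .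
  next
    fix x assume "2 powr M < x"
    then have "haar (fst p) (snd p) x = 0" if "p \<in> F" for p
      using support[OF that] by (intro haar_eq_0_outside) simp
    then show "\<phi> x = 0" unfolding \<phi> by simp
  next
    fix m assume "M \<le> m"
    then have "2 powr M \<le> 2 powr m" by simp
    have "haar (fst p) (snd p) x = 0" if "p \<in> F" "x \<notin> dyadic_cell m 0" for p x
      using order_trans[OF support[OF that(1)] \<open>2 powr M \<le> 2 powr m\<close>] that(2)
      by (rule haar_eq_0_outside_cell0)
    then have "(\<lambda>x. indicator (dyadic_cell m 0) x * \<phi> x) = \<phi>"
      unfolding \<phi> by (intro ext) (auto simp: indicator_def)
    moreover have "integral\<^sup>L lborel \<phi>
        = (\<Sum>p\<in>F. \<integral>x. c p * complex_of_real (haar (fst p) (snd p) x) \<partial>lborel)"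
      unfolding \<phi>
      by (intro Bochner_Integration.integral_sum integrable_mult_right integrable_of_real integrable_haar)
    ultimately show "(\<integral>x. indicator (dyadic_cell m 0) x * \<phi> x \<partial>lborel) = 0"
      by (simp add: integral_haar)
  next
    fix x y assume "0 < x" "0 < y" "same_cell m1 x y"
    have "m1 \<le> - fst p - 1" if "p \<in> F" for p
      unfolding m1_def using that \<open>finite F\<close> member_le_sum[of p F "\<lambda>p. \<bar>fst p\<bar>"] by auto
    then show "\<phi> x = \<phi> y"
      unfolding \<phi> using same_cell_mono[OF \<open>same_cell m1 x y\<close>] by (auto intro!: sum.cong haar_same_cell)
  next
    show "m1 < M" unfolding m1_def M_def by (smt (verit) sum_nonneg abs_ge_zero of_nat_0_le_iff)
  qed
  then show ?thesis by (rule that)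
qed

theorem theorem2p5:
  fixes s :: real and \<phi> :: "real \<Rightarrow> complex"
  assumes "0 < s" and "s < 1/2"
    and "\<phi> \<in> haar_span"
  shows "complex_of_real (dgamma s * L2_norm_pos \<phi> ^ 4)
           \<le> form_Q s \<phi> * complex_of_real (energy_E s \<phi>)"
proof -
  obtain B M m1 where "dyadic_test_function \<phi> B M m1"
    using haar_span_test_function[OF assms(3)] .
  then show ?thesis using assms(1,2) by (rule dyadic_test_function.uncertainty_inequality)
qed

end
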